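(* Let $G$ be as in the context. If $(x_n)\subset G$ is a Cauchy sequence for $d_{\mathcal{I}}$, then it is a Cauchy sequence for the norm $\|\cdot\|_2$, i.e. $\|x_n-x_m\|_2\to0$ as $n,m\to\infty$.
   Context: $\mathcal{H}$ is an infinite dimensional complex Hilbert space, $\mathcal{B}_2(\mathcal{H})$ the Hilbert–Schmidt operators with $\|a\|_2=\mathrm{Tr}(a^*a)^{1/2}$. ${\rm GL}_2(\mathcal{H})=\{g\in{\rm GL}(\mathcal{H}): g-1\in\mathcal{B}_2(\mathcal{H})\}$ (so $x_n-x_m\in\mathcal{B}_2(\mathcal{H})$). $G$ is a closed, connected, self-adjoint ($G^*=G$) Banach–Lie subgroup of ${\rm GL}_2(\mathcal{H})$ with closed Lie algebra $\mathfrak{g}\subset\mathcal{B}_2(\mathcal{H})$. $d_{\mathcal{I}}(p,q)$ is the infimum of $\int_0^1\|\alpha^{-1}\dot\alpha\|_2dt$ over piecewise smooth curves $\alpha$ in $G$ joining $p$ to $q$. *)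

theory Defs
  imports "HOL-Analysis.Analysis"
begin

text \<open>The Hilbert space H is modelled as l2 over an (infinite) index type 'i,
  i.e. via an orthonormal basis; operators are represented by their matrices
  with respect to that basis.  Every element of GL_2(H) is of the form 1 + a
  with a Hilbert-Schmidt, so all operators that occur are given by matrices.\<close>

type_synonym 'i mat = "'i \<Rightarrow> 'i \<Rightarrow> complex"

definition mid :: "'i mat" where
  "mid = (\<lambda>i j. if i = j then 1 else 0)"

definition msub :: "'i mat \<Rightarrow> 'i mat \<Rightarrow> 'i mat" where
  "msub a b = (\<lambda>i j. a i j - b i j)"

definition mscale :: "real \<Rightarrow> 'i mat \<Rightarrow> 'i mat" where
  "mscale t a = (\<lambda>i j. complex_of_real t * a i j)"

definition mmul :: "'i mat \<Rightarrow> 'i mat \<Rightarrow> 'i mat" where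
  "mmul a b = (\<lambda>i j. infsum (\<lambda>k. a i k * b k j) UNIV)"

definition madj :: "'i mat \<Rightarrow> 'i mat" where
  "madj a = (\<lambda>i j. cnj (a j i))"

text \<open>Hilbert-Schmidt operators and the norm \<open>\<parallel>a\<parallel>_2 = Tr(a* a)^(1/2)\<close>,
  where Tr(a* a) = sum over j of \<open>\<parallel>a e_j\<parallel>^2\<close> = sum over (i,j) of |a_ij|^2.\<close>
definition hs :: "'i mat \<Rightarrow> bool" where
  "hs a \<longleftrightarrow> (\<lambda>(i,j). (cmod (a i j))\<^sup>2) summable_on UNIV"

definition hs_norm :: "'i mat \<Rightarrow> real" where
  "hs_norm a = sqrt (infsum (\<lambda>(i,j). (cmod (a i j))\<^sup>2) UNIV)"

text \<open>GL_2(H) = {g in GL(H) : g - 1 Hilbert-Schmidt}; the inverse of such g is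
  automatically of the form 1 + (Hilbert-Schmidt).\<close>
definition GL2 :: "'i mat set" where
  "GL2 = {g. hs (msub g mid) \<and>
             (\<exists>h. hs (msub h mid) \<and> mmul g h = mid \<and> mmul h g = mid)}"

definition minv :: "'i mat \<Rightarrow> 'i mat" where
  "minv g = (THE h. hs (msub h mid) \<and> mmul g h = mid \<and> mmul h g = mid)"

fun mpow :: "'i mat \<Rightarrow> nat \<Rightarrow> 'i mat" where
  "mpow a 0 = mid"
| "mpow a (Suc n) = mmul a (mpow a n)"

definition mexp_partial :: "'i mat \<Rightarrow> nat \<Rightarrow> 'i mat" where
  "mexp_partial X n = (\<lambda>i j. \<Sum>k<n. mpow X k i j / of_nat (fact k))"

definition mexp :: "'i mat \<Rightarrow> 'i mat" where
  "mexp X = (THE E. hs (msub E mid) \<and>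
               (\<lambda>n. hs_norm (msub (mexp_partial X n) E)) \<longlonglongrightarrow> 0)"

definition hs_rel_open :: "'i mat set \<Rightarrow> 'i mat set \<Rightarrow> bool" where
  "hs_rel_open S U \<longleftrightarrow> U \<subseteq> S \<and>
     (\<forall>g\<in>U. \<exists>r>0. \<forall>h\<in>S. hs_norm (msub h g) < r \<longrightarrow> h \<in> U)"

definition hs_connected :: "'i mat set \<Rightarrow> bool" where
  "hs_connected S \<longleftrightarrow> \<not> (\<exists>A B. A \<inter> B = {} \<and> A \<union> B = S \<and> A \<noteq> {} \<and> B \<noteq> {} \<and>
                                 hs_rel_open S A \<and> hs_rel_open S B)"

definition hs_closed_in_GL2 :: "'i mat set \<Rightarrow> bool" where
  "hs_closed_in_GL2 S \<longleftrightarrow>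
     (\<forall>g\<in>GL2. (\<forall>e>0. \<exists>h\<in>S. hs_norm (msub h g) < e) \<longrightarrow> g \<in> S)"

definition is_subgroup_GL2 :: "'i mat set \<Rightarrow> bool" where
  "is_subgroup_GL2 G \<longleftrightarrow> G \<subseteq> GL2 \<and> mid \<in> G \<and>
     (\<forall>g\<in>G. \<forall>h\<in>G. mmul g h \<in> G) \<and> (\<forall>g\<in>G. minv g \<in> G)"

definition self_adjoint_set :: "'i mat set \<Rightarrow> bool" where
  "self_adjoint_set G \<longleftrightarrow> (\<forall>g\<in>G. madj g \<in> G)"

definition lie_alg :: "'i mat set \<Rightarrow> 'i mat set" where
  "lie_alg G = {X. hs X \<and> (\<forall>t::real. mexp (mscale t X) \<in> G)}"

definition closed_hs_subspace :: "'i mat set \<Rightarrow> bool" where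
  "closed_hs_subspace V \<longleftrightarrow> V \<subseteq> {X. hs X} \<and> (\<lambda>i j. 0) \<in> V \<and>
     (\<forall>X\<in>V. \<forall>Y\<in>V. (\<lambda>i j. X i j + Y i j) \<in> V) \<and>
     (\<forall>t. \<forall>X\<in>V. mscale t X \<in> V) \<and>
     (\<forall>X. hs X \<and> (\<forall>e>0. \<exists>Y\<in>V. hs_norm (msub Y X) < e) \<longrightarrow> X \<in> V)"

definition banach_lie_subgroup :: "'i mat set \<Rightarrow> bool" where
  "banach_lie_subgroup G \<longleftrightarrow> is_subgroup_GL2 G \<and> closed_hs_subspace (lie_alg G) \<and>
     (\<exists>e>0. \<exists>U. hs_rel_open G U \<and> mid \<in> U \<and>
        bij_betw mexp {X\<in>lie_alg G. hs_norm X < e} U \<and>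
        (\<forall>X\<in>{X\<in>lie_alg G. hs_norm X < e}. \<forall>r>0. \<exists>d>0. \<forall>Y\<in>{X\<in>lie_alg G. hs_norm X < e}.
            hs_norm (msub Y X) < d \<longrightarrow> hs_norm (msub (mexp Y) (mexp X)) < r) \<and>
        (\<forall>X\<in>{X\<in>lie_alg G. hs_norm X < e}. \<forall>r>0. \<exists>d>0. \<forall>Y\<in>{X\<in>lie_alg G. hs_norm X < e}.
            hs_norm (msub (mexp Y) (mexp X)) < d \<longrightarrow> hs_norm (msub Y X) < r))"

definition hs_cont_on :: "real set \<Rightarrow> (real \<Rightarrow> 'i mat) \<Rightarrow> bool" where
  "hs_cont_on S f \<longleftrightarrow>
     (\<forall>t\<in>S. ((\<lambda>s. hs_norm (msub (f s) (f t))) \<longlongrightarrow> 0) (at t within S))"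

definition hs_deriv_within :: "(real \<Rightarrow> 'i mat) \<Rightarrow> 'i mat \<Rightarrow> real \<Rightarrow> real set \<Rightarrow> bool" where
  "hs_deriv_within \<alpha> D t S \<longleftrightarrow> hs D \<and>
     ((\<lambda>s. hs_norm (\<lambda>i j. (\<alpha> s i j - \<alpha> t i j) / complex_of_real (s - t) - D i j))
        \<longlongrightarrow> 0) (at t within S)"

definition hs_pw_smooth :: "(real \<Rightarrow> 'i mat) \<Rightarrow> bool" where
  "hs_pw_smooth \<alpha> \<longleftrightarrow> (\<exists>T::real set. finite T \<and> {0,1} \<subseteq> T \<and> T \<subseteq> {0..1} \<and>
     (\<forall>a\<in>T. \<forall>b\<in>T. a < b \<and> {a<..<b} \<inter> T = {} \<longrightarrow>
        (\<exists>D. (\<forall>t\<in>{a..b}. hs_deriv_within \<alpha> (D t) t {a..b}) \<and> hs_cont_on {a..b} D)))"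

text \<open>velocity (defined except at finitely many points)\<close>
definition hs_vel :: "(real \<Rightarrow> 'i mat) \<Rightarrow> real \<Rightarrow> 'i mat" where
  "hs_vel \<alpha> t = (SOME D. hs_deriv_within \<alpha> D t {0..1})"

definition curve_length :: "(real \<Rightarrow> 'i mat) \<Rightarrow> real" where
  "curve_length \<alpha> = integral {0..1} (\<lambda>t. hs_norm (mmul (minv (\<alpha> t)) (hs_vel \<alpha> t)))"

definition dI :: "'i mat set \<Rightarrow> 'i mat \<Rightarrow> 'i mat \<Rightarrow> real" where
  "dI G p q = Inf {curve_length \<alpha> | \<alpha>. hs_pw_smooth \<alpha> \<and> (\<forall>t\<in>{0..1}. \<alpha> t \<in> G) \<and>
                                      \<alpha> 0 = p \<and> \<alpha> 1 = q}"

end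

theory Submission
  imports Defs
begin

text \<open>Matrices of the form \<open>1 + B\<^sub>2(H)\<close> live in the unitization \<open>\<complex>1 \<oplus> B\<^sub>2(H)\<close>, a Banach algebra
  for the norm \<open>\<bar>\<lambda>\<bar> + \<parallel>a\<parallel>\<^sub>2\<close>. For a piecewise smooth curve \<open>\<alpha>\<close> in \<open>G\<close> we have
  \<open>\<alpha>' = \<alpha> (\<alpha>\<inverse>\<alpha>')\<close>, so \<open>S = sup\<^sub>t \<parallel>\<alpha> t - \<alpha> 0\<parallel>\<close> satisfies \<open>S \<le> (\<parallel>\<alpha> 0\<parallel> + S) L\<close> with \<open>L\<close> the
  length of \<open>\<alpha>\<close>; hence \<open>\<parallel>\<alpha> 1 - \<alpha> 0\<parallel>\<^sub>2 \<le> 2 \<parallel>\<alpha> 0\<parallel> L\<close> as soon as \<open>L \<le> 1/2\<close>. Taking curves of almost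
  minimal length, \<open>\<parallel>q - p\<parallel>\<^sub>2 \<le> 2 \<parallel>p\<parallel> d\<^sub>I(p,q)\<close> for close points, so a \<open>d\<^sub>I\<close>-Cauchy sequence is first
  bounded and then \<open>\<parallel>\<cdot>\<parallel>\<^sub>2\<close>-Cauchy. That \<open>d\<^sub>I\<close> is an infimum over a nonempty set uses connectedness:
  the exponential chart shows that the points reachable from \<open>p\<close> by such curves form an open and
  closed subset of \<open>G\<close>.\<close>

section \<open>Hilbert--Schmidt matrices\<close>

definition hs_sq_norm :: "'i mat \<Rightarrow> real" where
  "hs_sq_norm a = infsum (\<lambda>(i,j). (cmod (a i j))\<^sup>2) UNIV"

lemma hs_norm_eq_sqrt: "hs_norm a = sqrt (hs_sq_norm a)"
  by (simp add: hs_norm_def hs_sq_norm_def)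

lemma hs_sq_norm_nonneg: "hs_sq_norm a \<ge> 0"
  unfolding hs_sq_norm_def by (rule infsum_nonneg) auto

lemma hs_norm_nonneg: "hs_norm a \<ge> 0"
  by (simp add: hs_norm_eq_sqrt hs_sq_norm_nonneg)

lemma hs_norm_power2: "(hs_norm a)\<^sup>2 = hs_sq_norm a"
  by (simp add: hs_norm_eq_sqrt hs_sq_norm_nonneg)

lemma nonneg_summable_on_if_sums_bounded:
  fixes f :: "'a \<Rightarrow> real"
  assumes "\<And>x. 0 \<le> f x" "\<And>F. finite F \<Longrightarrow> sum f F \<le> B"
  shows "f summable_on UNIV" "infsum f UNIV \<le> B"
proof -
  show f: "f summable_on UNIV"
    by (rule nonneg_bdd_above_summable_on) (auto intro!: bdd_aboveI2 assms)
  show "infsum f UNIV \<le> B"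
    by (rule infsum_le_finite_sums[OF f]) (use assms in auto)
qed

lemma hs_if_sums_bounded:
  assumes "\<And>F. finite F \<Longrightarrow> (\<Sum>(i,j)\<in>F. (cmod (a i j))\<^sup>2) \<le> B"
  shows "hs a" "hs_sq_norm a \<le> B"
  using nonneg_summable_on_if_sums_bounded[of "\<lambda>(i,j). (cmod (a i j))\<^sup>2" B] assms
  by (auto simp: hs_def hs_sq_norm_def)

lemma sum_le_hs_sq_norm:
  assumes "hs a" "finite F"
  shows "(\<Sum>(i,j)\<in>F. (cmod (a i j))\<^sup>2) \<le> hs_sq_norm a"
  unfolding hs_sq_norm_def
  by (rule finite_sum_le_infsum) (use assms in \<open>auto simp: hs_def\<close>)

lemma L2_set_le_hs_norm:
  assumes "hs a" "finite F"
  shows "L2_set (\<lambda>(i,j). cmod (a i j)) F \<le> hs_norm a"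
  unfolding L2_set_def hs_norm_eq_sqrt
  by (rule real_sqrt_le_mono) (use sum_le_hs_sq_norm[OF assms] in \<open>simp add: case_prod_unfold\<close>)

lemma norm_entry_le_hs_norm: "hs a \<Longrightarrow> cmod (a i j) \<le> hs_norm a"
  using L2_set_le_hs_norm[of a "{(i,j)}"] by simp

lemma hs_zero: "hs (\<lambda>i j. 0)" and hs_norm_zero: "hs_norm (\<lambda>i j. 0) = 0"
  by (simp_all add: hs_def hs_norm_def case_prod_unfold)

lemma hs_norm_eq_0D: "hs a \<Longrightarrow> hs_norm a = 0 \<Longrightarrow> a = (\<lambda>i j. 0)"
  using norm_entry_le_hs_norm[of a] by (intro ext) force

lemma
  assumes "hs a" "hs b"
  shows hs_add: "hs (\<lambda>i j. a i j + b i j)"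
    and hs_norm_add_le: "hs_norm (\<lambda>i j. a i j + b i j) \<le> hs_norm a + hs_norm b"
proof -
  have "(\<Sum>(i,j)\<in>F. (cmod (a i j + b i j))\<^sup>2) \<le> (hs_norm a + hs_norm b)\<^sup>2" if F: "finite F" for F
  proof -
    have "L2_set (\<lambda>(i,j). cmod (a i j + b i j)) F
        \<le> L2_set (\<lambda>p. (\<lambda>(i,j). cmod (a i j)) p + (\<lambda>(i,j). cmod (b i j)) p) F"
      by (rule L2_set_mono) (auto intro: norm_triangle_ineq)
    also have "\<dots> \<le> L2_set (\<lambda>(i,j). cmod (a i j)) F + L2_set (\<lambda>(i,j). cmod (b i j)) F"
      by (rule L2_set_triangle_ineq)
    also have "\<dots> \<le> hs_norm a + hs_norm b"
      by (intro add_mono L2_set_le_hs_norm assms F)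
    finally have "(L2_set (\<lambda>(i,j). cmod (a i j + b i j)) F)\<^sup>2 \<le> (hs_norm a + hs_norm b)\<^sup>2"
      by (simp add: power_mono)
    then show ?thesis
      by (simp add: L2_set_def sum_nonneg case_prod_unfold)
  qed
  note bound = hs_if_sums_bounded[OF this]
  show "hs (\<lambda>i j. a i j + b i j)" by (rule bound)
  show "hs_norm (\<lambda>i j. a i j + b i j) \<le> hs_norm a + hs_norm b"
    using bound(2) hs_norm_nonneg[of a] hs_norm_nonneg[of b]
    unfolding hs_norm_eq_sqrt[of "\<lambda>i j. a i j + b i j"] by (intro real_le_lsqrt) auto
qed

lemma
  assumes "hs a"
  shows hs_cmult: "hs (\<lambda>i j. c * a i j)"
    and hs_norm_cmult: "hs_norm (\<lambda>i j. c * a i j) = cmod c * hs_norm a"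
proof -
  have s: "(\<lambda>(i,j). (cmod (a i j))\<^sup>2) summable_on UNIV" using assms by (simp add: hs_def)
  have e: "(\<lambda>(i,j). (cmod (c * a i j))\<^sup>2) = (\<lambda>p. (cmod c)\<^sup>2 * (\<lambda>(i,j). (cmod (a i j))\<^sup>2) p)"
    by (auto simp: norm_mult power_mult_distrib)
  show "hs (\<lambda>i j. c * a i j)" unfolding hs_def e by (rule summable_on_cmult_right[OF s])
  have "hs_sq_norm (\<lambda>i j. c * a i j) = (cmod c)\<^sup>2 * hs_sq_norm a"
    unfolding hs_sq_norm_def e by (rule infsum_cmult_right) (use s in simp)
  then show "hs_norm (\<lambda>i j. c * a i j) = cmod c * hs_norm a"
    by (simp add: hs_norm_eq_sqrt real_sqrt_mult)
qed

lemma hs_uminus: "hs a \<Longrightarrow> hs (\<lambda>i j. - a i j)"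
  using hs_cmult[of a "-1"] by simp

lemma hs_diff: "hs a \<Longrightarrow> hs b \<Longrightarrow> hs (\<lambda>i j. a i j - b i j)"
  using hs_add[of a "\<lambda>i j. - b i j"] hs_uminus[of b] by simp

lemma hs_madj: "hs (madj a) \<longleftrightarrow> hs a"
  and hs_sq_norm_madj: "hs_sq_norm (madj a) = hs_sq_norm a"
proof -
  have swap: "(\<lambda>(i,j). (cmod (madj a i j))\<^sup>2) = (\<lambda>p. (\<lambda>(i,j). (cmod (a i j))\<^sup>2) (prod.swap p))"
    by (auto simp: madj_def)
  have bij: "bij_betw prod.swap (UNIV :: ('a \<times> 'a) set) UNIV"
    by (simp add: bij_swap)
  show "hs (madj a) \<longleftrightarrow> hs a"
    unfolding hs_def swap by (rule summable_on_reindex_bij_betw[OF bij])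
  show "hs_sq_norm (madj a) = hs_sq_norm a"
    unfolding hs_sq_norm_def swap by (rule infsum_reindex_bij_betw[OF bij])
qed

definition row_sq :: "'i mat \<Rightarrow> 'i \<Rightarrow> real" where
  "row_sq a i = infsum (\<lambda>k. (cmod (a i k))\<^sup>2) UNIV"

lemma row_sq_nonneg: "row_sq a i \<ge> 0"
  unfolding row_sq_def by (rule infsum_nonneg) auto

lemma sum_row_le_hs_sq_norm:
  assumes "hs a" "finite K"
  shows "(\<Sum>k\<in>K. (cmod (a i k))\<^sup>2) \<le> hs_sq_norm a"
proof -
  have "(\<Sum>k\<in>K. (cmod (a i k))\<^sup>2) = (\<Sum>(i',k)\<in>(\<lambda>k. (i,k)) ` K. (cmod (a i' k))\<^sup>2)"
    by (subst sum.reindex) (auto simp: inj_on_def)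
  also have "\<dots> \<le> hs_sq_norm a" by (rule sum_le_hs_sq_norm) (use assms in auto)
  finally show ?thesis .
qed

lemma summable_row: "hs a \<Longrightarrow> (\<lambda>k. (cmod (a i k))\<^sup>2) summable_on UNIV"
  by (rule nonneg_summable_on_if_sums_bounded(1)[where B = "hs_sq_norm a"])
    (auto intro: sum_row_le_hs_sq_norm)

lemma L2_set_row_le: "hs a \<Longrightarrow> finite K \<Longrightarrow> L2_set (\<lambda>k. cmod (a i k)) K \<le> sqrt (row_sq a i)"
  unfolding L2_set_def row_sq_def
  by (rule real_sqrt_le_mono, rule finite_sum_le_infsum) (auto intro: summable_row)

lemma has_sum_finite_sum:
  fixes f :: "'a \<Rightarrow> 'b \<Rightarrow> 'c::topological_comm_monoid_add"
  assumes "finite I" "\<And>i. i \<in> I \<Longrightarrow> (f i has_sum s i) A"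
  shows "((\<lambda>k. \<Sum>i\<in>I. f i k) has_sum (\<Sum>i\<in>I. s i)) A"
  using assms by (induction I rule: finite_induct) (auto intro: has_sum_add)

lemma sum_row_sq_le:
  assumes "hs a" "finite I"
  shows "(\<Sum>i\<in>I. row_sq a i) \<le> hs_sq_norm a"
proof -
  have "((\<lambda>k. \<Sum>i\<in>I. (cmod (a i k))\<^sup>2) has_sum (\<Sum>i\<in>I. row_sq a i)) UNIV"
    unfolding row_sq_def
    by (rule has_sum_finite_sum) (use assms(2) has_sum_infsum[OF summable_row[OF assms(1)]] in auto)
  then show ?thesis
  proof (rule has_sum_le_finite_sums)
    fix K :: "'a set" assume "finite K"
    have "(\<Sum>k\<in>K. \<Sum>i\<in>I. (cmod (a i k))\<^sup>2) = (\<Sum>(i,k)\<in>I \<times> K. (cmod (a i k))\<^sup>2)"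
      by (subst sum.swap) (simp add: sum.cartesian_product)
    also have "\<dots> \<le> hs_sq_norm a" by (rule sum_le_hs_sq_norm) (use assms \<open>finite K\<close> in auto)
    finally show "(\<Sum>k\<in>K. \<Sum>i\<in>I. (cmod (a i k))\<^sup>2) \<le> hs_sq_norm a" .
  qed
qed

text \<open>Columns of \<open>b\<close> are the rows of \<open>madj b\<close>, up to conjugation of the entries.\<close>

lemma
  assumes "hs a" "hs b"
  shows abs_summable_mmul_entry: "(\<lambda>k. norm (a i k * b k j)) summable_on UNIV"
    and infsum_norm_mmul_entry_le:
      "infsum (\<lambda>k. norm (a i k * b k j)) UNIV \<le> sqrt (row_sq a i) * sqrt (row_sq (madj b) j)"
proof -
  have "(\<Sum>k\<in>K. norm (a i k * b k j)) \<le> sqrt (row_sq a i) * sqrt (row_sq (madj b) j)"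
    if K: "finite K" for K
  proof -
    have "(\<Sum>k\<in>K. norm (a i k * b k j)) = (\<Sum>k\<in>K. \<bar>cmod (a i k)\<bar> * \<bar>cmod (madj b j k)\<bar>)"
      by (simp add: norm_mult madj_def)
    also have "\<dots> \<le> L2_set (\<lambda>k. cmod (a i k)) K * L2_set (\<lambda>k. cmod (madj b j k)) K"
      by (rule L2_set_mult_ineq)
    also have "\<dots> \<le> sqrt (row_sq a i) * sqrt (row_sq (madj b) j)"
      using assms K by (intro mult_mono L2_set_row_le) (auto simp: hs_madj row_sq_nonneg)
    finally show ?thesis .
  qed
  then show "(\<lambda>k. norm (a i k * b k j)) summable_on UNIV"
    "infsum (\<lambda>k. norm (a i k * b k j)) UNIV \<le> sqrt (row_sq a i) * sqrt (row_sq (madj b) j)"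
    using nonneg_summable_on_if_sums_bounded[of "\<lambda>k. norm (a i k * b k j)"] by auto
qed

lemma summable_mmul_entry: "hs a \<Longrightarrow> hs b \<Longrightarrow> (\<lambda>k. a i k * b k j) summable_on UNIV"
  by (rule abs_summable_summable[OF abs_summable_mmul_entry])

lemma
  assumes "hs a" "hs b"
  shows hs_mmul: "hs (mmul a b)"
    and hs_norm_mmul_le: "hs_norm (mmul a b) \<le> hs_norm a * hs_norm b"
proof -
  have entry: "(cmod (mmul a b i j))\<^sup>2 \<le> row_sq a i * row_sq (madj b) j" for i j
  proof -
    have "cmod (mmul a b i j) \<le> sqrt (row_sq a i) * sqrt (row_sq (madj b) j)"
      unfolding mmul_def
      by (rule order_trans[OF norm_infsum_bound[OF abs_summable_mmul_entry[OF assms]]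
            infsum_norm_mmul_entry_le[OF assms]])
    then show ?thesis
      by (metis norm_ge_zero power_mono real_sqrt_mult real_sqrt_pow2 row_sq_nonneg
          mult_nonneg_nonneg)
  qed
  have "(\<Sum>(i,j)\<in>F. (cmod (mmul a b i j))\<^sup>2) \<le> hs_sq_norm a * hs_sq_norm b" if F: "finite F" for F
  proof -
    have "(\<Sum>(i,j)\<in>F. (cmod (mmul a b i j))\<^sup>2) \<le> (\<Sum>(i,j)\<in>F. row_sq a i * row_sq (madj b) j)"
      by (rule sum_mono) (auto intro: entry)
    also have "\<dots> \<le> (\<Sum>(i,j)\<in>fst ` F \<times> snd ` F. row_sq a i * row_sq (madj b) j)"
      by (rule sum_mono2) (use F in \<open>auto simp: row_sq_nonneg, force+\<close>)
    also have "\<dots> = (\<Sum>i\<in>fst ` F. row_sq a i) * (\<Sum>j\<in>snd ` F. row_sq (madj b) j)"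
      by (simp add: sum_product sum.cartesian_product)
    also have "\<dots> \<le> hs_sq_norm a * hs_sq_norm (madj b)"
      using assms F
      by (intro mult_mono sum_row_sq_le) (auto simp: hs_madj hs_sq_norm_nonneg sum_nonneg row_sq_nonneg)
    also have "\<dots> = hs_sq_norm a * hs_sq_norm b" by (simp add: hs_sq_norm_madj)
    finally show ?thesis .
  qed
  note bound = hs_if_sums_bounded[OF this]
  show "hs (mmul a b)" by (rule bound)
  show "hs_norm (mmul a b) \<le> hs_norm a * hs_norm b"
    using bound(2) by (simp add: hs_norm_eq_sqrt real_sqrt_mult[symmetric])
qed

lemma mmul_mid_right: "mmul a mid = a"
proof (intro ext)
  fix i j
  have "mmul a mid i j = infsum (\<lambda>k. a i k * mid k j) {j}"
    unfolding mmul_def by (rule infsum_cong_neutral) (auto simp: mid_def)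
  then show "mmul a mid i j = a i j" by (simp add: mid_def)
qed

lemma mmul_add_left:
  "hs a \<Longrightarrow> hs b \<Longrightarrow> hs c \<Longrightarrow> mmul (\<lambda>i j. a i j + b i j) c = (\<lambda>i j. mmul a c i j + mmul b c i j)"
  unfolding mmul_def
  by (intro ext, simp only: distrib_right, rule infsum_add) (auto intro: summable_mmul_entry)

lemma mmul_add_right:
  "hs a \<Longrightarrow> hs b \<Longrightarrow> hs c \<Longrightarrow> mmul a (\<lambda>i j. b i j + c i j) = (\<lambda>i j. mmul a b i j + mmul a c i j)"
  unfolding mmul_def
  by (intro ext, simp only: distrib_left, rule infsum_add) (auto intro: summable_mmul_entry)

lemma mmul_cmult_left: "mmul (\<lambda>i j. c * a i j) b = (\<lambda>i j. c * mmul a b i j)"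
  unfolding mmul_def by (simp add: mult.assoc infsum_cmult_right')

lemma mmul_cmult_right: "mmul a (\<lambda>i j. c * b i j) = (\<lambda>i j. c * mmul a b i j)"
  unfolding mmul_def by (simp add: mult.left_commute[of _ c] infsum_cmult_right')

lemma mmul_assoc:
  assumes "hs a" "hs b" "hs c"
  shows "mmul (mmul a b) c = mmul a (mmul b c)"
proof (intro ext)
  fix i j
  let ?f = "\<lambda>(k,l). a i k * b k l * c l j"
  have "(\<Sum>p\<in>F. norm (?f p)) \<le> sqrt (row_sq a i * row_sq (madj c) j) * hs_norm b"
    if F: "finite F" for F
  proof -
    have "(\<Sum>p\<in>F. norm (?f p))
        = (\<Sum>(k,l)\<in>F. \<bar>cmod (a i k) * cmod (madj c j l)\<bar> * \<bar>cmod (b k l)\<bar>)"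
      by (intro sum.cong) (auto simp: norm_mult madj_def)
    also have "\<dots> \<le> L2_set (\<lambda>(k,l). cmod (a i k) * cmod (madj c j l)) F
                    * L2_set (\<lambda>(k,l). cmod (b k l)) F"
      using L2_set_mult_ineq[of "\<lambda>(k,l). cmod (a i k) * cmod (madj c j l)" "\<lambda>(k,l). cmod (b k l)" F]
      by (simp add: case_prod_unfold)
    also have "\<dots> \<le> sqrt (row_sq a i * row_sq (madj c) j) * hs_norm b"
    proof (rule mult_mono)
      have "(\<Sum>(k,l)\<in>F. (cmod (a i k) * cmod (madj c j l))\<^sup>2)
          \<le> (\<Sum>(k,l)\<in>fst ` F \<times> snd ` F. (cmod (a i k) * cmod (madj c j l))\<^sup>2)"
        by (rule sum_mono2) (use F in force)+
      also have "\<dots> = (\<Sum>k\<in>fst ` F. (cmod (a i k))\<^sup>2) * (\<Sum>l\<in>snd ` F. (cmod (madj c j l))\<^sup>2)"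
        by (simp add: sum_product sum.cartesian_product power_mult_distrib)
      also have "\<dots> \<le> row_sq a i * row_sq (madj c) j"
        unfolding row_sq_def using assms F
        by (intro mult_mono finite_sum_le_infsum summable_row)
          (auto simp: hs_madj sum_nonneg intro: infsum_nonneg)
      finally show "L2_set (\<lambda>(k,l). cmod (a i k) * cmod (madj c j l)) F
          \<le> sqrt (row_sq a i * row_sq (madj c) j)"
        unfolding L2_set_def by (intro real_sqrt_le_mono) (simp add: case_prod_unfold)
    qed (use L2_set_le_hs_norm[OF assms(2) F] in \<open>auto simp: row_sq_nonneg\<close>)
    finally show ?thesis .
  qed
  then have "(\<lambda>p. norm (?f p)) summable_on UNIV"
    by (intro nonneg_summable_on_if_sums_bounded(1)) auto
  then have summable: "?f summable_on (UNIV \<times> UNIV)"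
    by (simp add: abs_summable_summable)
  have "mmul (mmul a b) c i j = (\<Sum>\<^sub>\<infinity>l. \<Sum>\<^sub>\<infinity>k. ?f (k,l))"
    unfolding mmul_def by (simp add: infsum_cmult_left'[symmetric])
  also have "\<dots> = (\<Sum>\<^sub>\<infinity>k. \<Sum>\<^sub>\<infinity>l. ?f (k,l))"
    using infsum_swap_banach[of "\<lambda>k l. ?f (k,l)"] summable by simp
  also have "\<dots> = mmul a (mmul b c) i j"
    unfolding mmul_def by (simp add: infsum_cmult_right'[symmetric] mult.assoc)
  finally show "mmul (mmul a b) c i j = mmul a (mmul b c) i j" .
qed

lemma
  assumes lim: "\<And>i j. (\<lambda>m. b m i j) \<longlonglongrightarrow> c i j"
    and bound: "\<forall>\<^sub>F m in sequentially. hs (b m) \<and> hs_norm (b m) \<le> e"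
  shows hs_entrywise_limit: "hs c"
    and hs_norm_entrywise_limit_le: "hs_norm c \<le> e"
proof -
  have "(\<Sum>(i,j)\<in>F. (cmod (c i j))\<^sup>2) \<le> e\<^sup>2" if F: "finite F" for F
  proof (rule tendsto_le[OF trivial_limit_sequentially tendsto_const])
    show "(\<lambda>m. \<Sum>(i,j)\<in>F. (cmod (b m i j))\<^sup>2) \<longlonglongrightarrow> (\<Sum>(i,j)\<in>F. (cmod (c i j))\<^sup>2)"
      by (auto intro!: tendsto_sum tendsto_intros lim simp: case_prod_unfold)
    show "\<forall>\<^sub>F m in sequentially. (\<Sum>(i,j)\<in>F. (cmod (b m i j))\<^sup>2) \<le> e\<^sup>2"
      using bound
    proof eventually_elim
      case (elim m)
      then have "(\<Sum>(i,j)\<in>F. (cmod (b m i j))\<^sup>2) \<le> (hs_norm (b m))\<^sup>2"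
        using sum_le_hs_sq_norm[OF _ F] by (simp add: hs_norm_power2)
      also have "\<dots> \<le> e\<^sup>2" using elim by (intro power_mono) (auto simp: hs_norm_nonneg)
      finally show ?case .
    qed
  qed
  note c = hs_if_sums_bounded[OF this]
  show "hs c" by (rule c)
  obtain m where "hs_norm (b m) \<le> e" using bound by (auto simp: eventually_sequentially)
  then have "e \<ge> 0" using hs_norm_nonneg order_trans by blast
  then show "hs_norm c \<le> e"
    using c(2) by (simp add: hs_norm_eq_sqrt real_sqrt_le_iff real_le_lsqrt)
qed

lemma hs_Cauchy_converges:
  assumes hs: "\<And>n. hs (a n)"
    and Cauchy: "\<And>e. e > 0 \<Longrightarrow> \<exists>N. \<forall>n\<ge>N. \<forall>m\<ge>N. hs_norm (msub (a n) (a m)) < e"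
  shows "\<exists>c. hs c \<and> (\<lambda>n. hs_norm (msub (a n) c)) \<longlonglongrightarrow> 0"
proof -
  have hs_msub: "hs (msub (a n) (a m))" for n m
    unfolding msub_def by (intro hs_diff hs)
  define c where "c i j = lim (\<lambda>n. a n i j)" for i j
  have "Cauchy (\<lambda>n. a n i j)" for i j
  proof (rule metric_CauchyI)
    fix e :: real assume "e > 0"
    with Cauchy obtain N where "\<forall>n\<ge>N. \<forall>m\<ge>N. hs_norm (msub (a n) (a m)) < e" by blast
    moreover have "dist (a n i j) (a m i j) \<le> hs_norm (msub (a n) (a m))" for n m
      using norm_entry_le_hs_norm[OF hs_msub, of n m i j] by (simp add: dist_norm msub_def)
    ultimately show "\<exists>N. \<forall>n\<ge>N. \<forall>m\<ge>N. dist (a n i j) (a m i j) < e"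
      by (meson le_less_trans)
  qed
  then have lim: "(\<lambda>n. a n i j) \<longlonglongrightarrow> c i j" for i j
    unfolding c_def using Cauchy_convergent_iff convergent_LIMSEQ_iff by blast
  have close: "hs (msub (a n) c) \<and> hs_norm (msub (a n) c) \<le> e"
    if "\<forall>n\<ge>N. \<forall>m\<ge>N. hs_norm (msub (a n) (a m)) < e" "n \<ge> N" for e N n
  proof -
    have "\<forall>\<^sub>F m in sequentially. hs (msub (a n) (a m)) \<and> hs_norm (msub (a n) (a m)) \<le> e"
      using that hs_msub by (auto simp: eventually_sequentially intro!: exI[of _ N] less_imp_le)
    moreover have "(\<lambda>m. msub (a n) (a m) i j) \<longlonglongrightarrow> msub (a n) c i j" for i j
      unfolding msub_def by (intro tendsto_intros lim)
    ultimately show ?thesis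
      using hs_entrywise_limit[of "\<lambda>m. msub (a n) (a m)"]
        hs_norm_entrywise_limit_le[of "\<lambda>m. msub (a n) (a m)"] by blast
  qed
  obtain N where "\<forall>n\<ge>N. \<forall>m\<ge>N. hs_norm (msub (a n) (a m)) < 1" using Cauchy[of 1] by auto
  then have "hs (msub (a N) c)" using close by blast
  then have "hs c" using hs_diff[OF hs[of N], of "msub (a N) c"] by (simp add: msub_def)
  moreover have "(\<lambda>n. hs_norm (msub (a n) c)) \<longlonglongrightarrow> 0"
  proof (rule LIMSEQ_I)
    fix r :: real assume "r > 0"
    then obtain N where "\<forall>n\<ge>N. \<forall>m\<ge>N. hs_norm (msub (a n) (a m)) < r/2"
      using Cauchy[of "r/2"] by auto
    then have "\<forall>n\<ge>N. hs_norm (msub (a n) c) \<le> r/2" using close by blast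
    then show "\<exists>N. \<forall>n\<ge>N. norm (hs_norm (msub (a n) c) - 0) < r"
      using \<open>r > 0\<close> by (auto simp: hs_norm_nonneg intro!: exI[of _ N])
  qed
  ultimately show ?thesis by blast
qed

section \<open>The unitization \<open>\<complex>1 \<oplus> B\<^sub>2\<close> as a Banach algebra\<close>

typedef 'i unitization = "{p :: complex \<times> 'i mat. hs (snd p)}"
  morphisms Rep_unitization Abs_unitization
  by (rule exI[of _ "(0, \<lambda>i j. 0)"]) (simp add: hs_zero)

setup_lifting type_definition_unitization

lift_definition scalar_part :: "'i unitization \<Rightarrow> complex" is fst .
lift_definition hs_part :: "'i unitization \<Rightarrow> 'i mat" is snd .

lemma hs_hs_part [simp]: "hs (hs_part x)"
  by transfer simp

lemma unitization_eqI: "scalar_part x = scalar_part y \<Longrightarrow> hs_part x = hs_part y \<Longrightarrow> x = y"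
  by transfer (simp add: prod_eq_iff)

instantiation unitization :: (type) "{real_vector, one, times}"
begin

lift_definition zero_unitization :: "'i unitization" is "(0, \<lambda>i j. 0)"
  by (simp add: hs_zero)
lift_definition one_unitization :: "'i unitization" is "(1, \<lambda>i j. 0)"
  by (simp add: hs_zero)
lift_definition plus_unitization :: "'i unitization \<Rightarrow> 'i unitization \<Rightarrow> 'i unitization"
  is "\<lambda>p q. (fst p + fst q, \<lambda>i j. snd p i j + snd q i j)" by (simp add: hs_add)
lift_definition uminus_unitization :: "'i unitization \<Rightarrow> 'i unitization"
  is "\<lambda>p. (- fst p, \<lambda>i j. - snd p i j)" by (simp add: hs_uminus)
lift_definition minus_unitization :: "'i unitization \<Rightarrow> 'i unitization \<Rightarrow> 'i unitization"
  is "\<lambda>p q. (fst p - fst q, \<lambda>i j. snd p i j - snd q i j)" by (simp add: hs_diff)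
lift_definition scaleR_unitization :: "real \<Rightarrow> 'i unitization \<Rightarrow> 'i unitization"
  is "\<lambda>r p. (of_real r * fst p, \<lambda>i j. of_real r * snd p i j)" by (simp add: hs_cmult)
text \<open>\<open>(\<lambda> + a)(\<mu> + b) = \<lambda>\<mu> + (\<lambda>b + \<mu>a + ab)\<close>\<close>

lift_definition times_unitization :: "'i unitization \<Rightarrow> 'i unitization \<Rightarrow> 'i unitization"
  is "\<lambda>p q. (fst p * fst q, \<lambda>i j. fst p * snd q i j + fst q * snd p i j + mmul (snd p) (snd q) i j)"
  by (simp add: hs_add hs_cmult hs_mmul)

instance
  by intro_classes (transfer; auto simp: algebra_simps)+

end

lemma scalar_part_simps [simp]:
  "scalar_part 0 = 0" "scalar_part 1 = 1"
  "scalar_part (x + y) = scalar_part x + scalar_part y"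
  "scalar_part (x - y) = scalar_part x - scalar_part y"
  "scalar_part (r *\<^sub>R x) = of_real r * scalar_part x"
  "scalar_part (x * y) = scalar_part x * scalar_part y"
  by (transfer; simp)+

lemma hs_part_simps [simp]:
  "hs_part 0 = (\<lambda>i j. 0)" "hs_part 1 = (\<lambda>i j. 0)"
  "hs_part (x + y) = (\<lambda>i j. hs_part x i j + hs_part y i j)"
  "hs_part (x - y) = (\<lambda>i j. hs_part x i j - hs_part y i j)"
  "hs_part (r *\<^sub>R x) = (\<lambda>i j. of_real r * hs_part x i j)"
  "hs_part (x * y) = (\<lambda>i j. scalar_part x * hs_part y i j + scalar_part y * hs_part x i j
                              + mmul (hs_part x) (hs_part y) i j)"
  by (transfer; simp)+

lemmas mmul_linear = mmul_add_left mmul_add_right mmul_cmult_left mmul_cmult_right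

instance unitization :: (type) real_algebra_1
proof
  fix x y z :: "'i unitization" and r :: real
  show "x * y * z = x * (y * z)"
    by (rule unitization_eqI)
      (simp_all add: mmul_linear mmul_assoc hs_add hs_cmult hs_mmul algebra_simps)
  show "(x + y) * z = x * z + y * z" "x * (y + z) = x * y + x * z"
    by (rule unitization_eqI; simp add: mmul_linear algebra_simps)+
  show "r *\<^sub>R x * y = r *\<^sub>R (x * y)" "x * r *\<^sub>R y = r *\<^sub>R (x * y)"
    by (rule unitization_eqI; simp add: mmul_linear algebra_simps)+
  show "1 * x = x" "x * 1 = x"
    by (rule unitization_eqI; simp add: mmul_def)+
  show "(0::'i unitization) \<noteq> 1"
    by (metis scalar_part_simps(1,2) zero_neq_one)
qed

instantiation unitization :: (type) real_normed_algebra_1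
begin

lift_definition norm_unitization :: "'i unitization \<Rightarrow> real"
  is "\<lambda>p. cmod (fst p) + hs_norm (snd p)" .

definition sgn_unitization_def: "sgn (x::'a unitization) = x /\<^sub>R norm x"
definition dist_unitization_def: "dist (x::'a unitization) y = norm (x - y)"
definition uniformity_unitization_def [code del]:
  "(uniformity :: ('a unitization \<times> 'a unitization) filter) =
     (INF e\<in>{0 <..}. principal {(x, y). dist x y < e})"
definition open_unitization_def [code del]:
  "open (U :: 'a unitization set) \<longleftrightarrow>
     (\<forall>x\<in>U. eventually (\<lambda>(x', y). x' = x \<longrightarrow> y \<in> U) uniformity)"

lemma norm_unitization_eq: "norm (x::'a unitization) = cmod (scalar_part x) + hs_norm (hs_part x)"
  by transfer simp

instance
proof
  fix r :: real and x y :: "'a unitization"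
  show "norm x = 0 \<longleftrightarrow> x = 0"
  proof
    assume "norm x = 0"
    then have "cmod (scalar_part x) + hs_norm (hs_part x) = 0" by (simp add: norm_unitization_eq)
    then have "scalar_part x = 0 \<and> hs_norm (hs_part x) = 0"
      using hs_norm_nonneg[of "hs_part x"] by (simp add: add_nonneg_eq_0_iff)
    then show "x = 0" by (intro unitization_eqI) (simp_all add: hs_norm_eq_0D)
  qed (simp add: norm_unitization_eq hs_norm_zero)
  show "norm (x + y) \<le> norm x + norm y"
    using hs_norm_add_le[of "hs_part x" "hs_part y"] norm_triangle_ineq[of "scalar_part x" "scalar_part y"]
    by (simp add: norm_unitization_eq)
  show "norm (r *\<^sub>R x) = \<bar>r\<bar> * norm x"
    by (simp add: norm_unitization_eq hs_norm_cmult norm_mult algebra_simps)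
  show "norm (x * y) \<le> norm x * norm y"
  proof -
    let ?a = "scalar_part x" and ?b = "scalar_part y" and ?A = "hs_part x" and ?B = "hs_part y"
    have "hs_norm (hs_part (x * y))
        \<le> hs_norm (\<lambda>i j. ?a * ?B i j + ?b * ?A i j) + hs_norm (mmul ?A ?B)"
      by (simp add: hs_norm_add_le hs_add hs_cmult hs_mmul)
    also have "\<dots> \<le> cmod ?a * hs_norm ?B + cmod ?b * hs_norm ?A + hs_norm ?A * hs_norm ?B"
      using hs_norm_add_le[of "\<lambda>i j. ?a * ?B i j" "\<lambda>i j. ?b * ?A i j"] hs_norm_mmul_le[of ?A ?B]
      by (simp add: hs_cmult hs_norm_cmult)
    finally show ?thesis
      by (simp add: norm_unitization_eq norm_mult algebra_simps)
  qed
  show "norm (1::'a unitization) = 1"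
    by (simp add: norm_unitization_eq hs_norm_zero)
qed (rule sgn_unitization_def dist_unitization_def open_unitization_def uniformity_unitization_def)+

end

lemma norm_scalar_part_le: "cmod (scalar_part x) \<le> norm x"
  and hs_norm_hs_part_le: "hs_norm (hs_part x) \<le> norm x"
  by (simp_all add: norm_unitization_eq hs_norm_nonneg)

lemma bounded_linear_scalar_part: "bounded_linear scalar_part"
proof (rule bounded_linear_intro[where K = 1])
  show "scalar_part (r *\<^sub>R x) = r *\<^sub>R scalar_part x" for r x
    by (simp add: scaleR_conv_of_real[of r "scalar_part x"])
qed (simp_all add: norm_scalar_part_le)

instance unitization :: (type) banach
proof
  fix X :: "nat \<Rightarrow> 'i unitization"
  assume "Cauchy X"
  then have Cauchy: "\<exists>N. \<forall>n\<ge>N. \<forall>m\<ge>N. norm (X n - X m) < e" if "e > 0" for e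
    using that by (simp add: Cauchy_def dist_norm)
  have "Cauchy (\<lambda>n. scalar_part (X n))"
  proof (rule metric_CauchyI)
    fix e :: real assume "e > 0"
    moreover have "dist (scalar_part (X n)) (scalar_part (X m)) \<le> norm (X n - X m)" for n m
      using norm_scalar_part_le[of "X n - X m"] by (simp add: dist_norm)
    ultimately show "\<exists>N. \<forall>n\<ge>N. \<forall>m\<ge>N. dist (scalar_part (X n)) (scalar_part (X m)) < e"
      using Cauchy by (meson le_less_trans)
  qed
  then obtain c where c: "(\<lambda>n. scalar_part (X n)) \<longlonglongrightarrow> c"
    using Cauchy_convergent_iff convergent_def by blast
  have "hs_norm (msub (hs_part (X n)) (hs_part (X m))) \<le> norm (X n - X m)" for n m
    using hs_norm_hs_part_le[of "X n - X m"] by (simp add: msub_def)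
  then have "\<exists>N. \<forall>n\<ge>N. \<forall>m\<ge>N. hs_norm (msub (hs_part (X n)) (hs_part (X m))) < e" if "e > 0" for e
    using Cauchy[OF that] by (meson le_less_trans)
  then obtain A where "hs A" and A: "(\<lambda>n. hs_norm (msub (hs_part (X n)) A)) \<longlonglongrightarrow> 0"
    using hs_Cauchy_converges[of "\<lambda>n. hs_part (X n)"] by auto
  define Y where "Y = Abs_unitization (c, A)"
  have "scalar_part Y = c" "hs_part Y = A"
    using \<open>hs A\<close> by (simp_all add: Y_def scalar_part.abs_eq hs_part.abs_eq eq_onp_def)
  then have "norm (X n - Y) = cmod (scalar_part (X n) - c) + hs_norm (msub (hs_part (X n)) A)" for n
    by (simp add: norm_unitization_eq msub_def)
  moreover have "(\<lambda>n. cmod (scalar_part (X n) - c) + hs_norm (msub (hs_part (X n)) A)) \<longlonglongrightarrow> 0"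
    using tendsto_add[OF tendsto_norm_zero[OF LIM_zero[OF c]] A] by simp
  ultimately have "(\<lambda>n. norm (X n - Y)) \<longlonglongrightarrow> 0" by simp
  then have "X \<longlonglongrightarrow> Y"
    using tendsto_norm_zero_iff LIM_zero_iff by blast
  then show "convergent X" unfolding convergent_def by blast
qed

section \<open>Matrices of the form \<open>1 + B\<^sub>2\<close> inside the unitization\<close>

text \<open>\<open>of_mat g\<close> is only meaningful when \<open>g - 1\<close> is Hilbert--Schmidt, and \<open>of_hs a\<close> only
  when \<open>a\<close> is.\<close>

definition of_hs :: "'i mat \<Rightarrow> 'i unitization" where
  "of_hs a = Abs_unitization (0, a)"

definition of_mat :: "'i mat \<Rightarrow> 'i unitization" where
  "of_mat g = Abs_unitization (1, msub g mid)"

definition to_mat :: "'i unitization \<Rightarrow> 'i mat" where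
  "to_mat x = (\<lambda>i j. scalar_part x * mid i j + hs_part x i j)"

lemma
  assumes "hs a"
  shows scalar_part_of_hs [simp]: "scalar_part (of_hs a) = 0"
    and hs_part_of_hs [simp]: "hs_part (of_hs a) = a"
  using assms by (simp_all add: of_hs_def scalar_part.abs_eq hs_part.abs_eq eq_onp_def)

lemma
  assumes "hs (msub g mid)"
  shows scalar_part_of_mat [simp]: "scalar_part (of_mat g) = 1"
    and hs_part_of_mat [simp]: "hs_part (of_mat g) = msub g mid"
  using assms by (simp_all add: of_mat_def scalar_part.abs_eq hs_part.abs_eq eq_onp_def)

lemma to_mat_of_mat: "hs (msub g mid) \<Longrightarrow> to_mat (of_mat g) = g"
  by (simp add: to_mat_def msub_def mid_def fun_eq_iff)

lemma of_mat_inj: "hs (msub g mid) \<Longrightarrow> hs (msub h mid) \<Longrightarrow> of_mat g = of_mat h \<Longrightarrow> g = h"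
  using to_mat_of_mat by metis

lemma of_hs_hs_part: "scalar_part x = 0 \<Longrightarrow> of_hs (hs_part x) = x"
  by (rule unitization_eqI) simp_all

lemma
  assumes "scalar_part x = 1"
  shows hs_to_mat_minus_mid: "hs (msub (to_mat x) mid)"
    and of_mat_to_mat: "of_mat (to_mat x) = x"
proof -
  have "msub (to_mat x) mid = hs_part x"
    using assms by (simp add: to_mat_def msub_def fun_eq_iff)
  then show "hs (msub (to_mat x) mid)" "of_mat (to_mat x) = x"
    using assms by (auto intro: unitization_eqI)
qed

lemma to_mat_of_hs: "hs a \<Longrightarrow> to_mat (of_hs a) = a"
  by (simp add: to_mat_def)

lemma norm_eq_hs_norm_to_mat: "scalar_part x = 0 \<Longrightarrow> norm x = hs_norm (to_mat x)"
  by (simp add: norm_unitization_eq to_mat_def)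

lemma norm_of_hs: "hs a \<Longrightarrow> norm (of_hs a) = hs_norm a"
  by (simp add: norm_unitization_eq)

lemma of_hs_diff: "hs a \<Longrightarrow> hs b \<Longrightarrow> of_hs a - of_hs b = of_hs (msub a b)"
  by (rule unitization_eqI) (simp_all add: msub_def hs_diff)

lemma hs_msub_if_minus_mid: "hs (msub g mid) \<Longrightarrow> hs (msub h mid) \<Longrightarrow> hs (msub g h)"
  using hs_diff[of "msub g mid" "msub h mid"] by (simp add: msub_def)

lemma of_mat_diff:
  assumes "hs (msub g mid)" "hs (msub h mid)"
  shows "of_mat g - of_mat h = of_hs (msub g h)"
  by (rule unitization_eqI) (use hs_msub_if_minus_mid[OF assms] assms in \<open>simp_all add: msub_def\<close>)

lemma norm_of_mat_diff:
  "hs (msub g mid) \<Longrightarrow> hs (msub h mid) \<Longrightarrow> norm (of_mat g - of_mat h) = hs_norm (msub g h)"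
  by (simp add: of_mat_diff norm_of_hs hs_msub_if_minus_mid)

lemma norm_of_mat_ge_1: "hs (msub g mid) \<Longrightarrow> norm (of_mat g) \<ge> 1"
  by (simp add: norm_unitization_eq hs_norm_nonneg)

lemma of_mat_mid: "of_mat mid = 1"
  by (rule unitization_eqI) (simp_all add: msub_def hs_zero)

lemma has_sum_mid_left: "((\<lambda>k. mid i k * f k) has_sum f i) UNIV"
proof -
  have "((\<lambda>k. mid i k * f k) has_sum f i) {i}"
    using has_sum_finite[of "{i}" "\<lambda>k. mid i k * f k"] by (simp add: mid_def)
  then show ?thesis by (subst has_sum_cong_neutral[of "{i}"]) (auto simp: mid_def)
qed

lemma has_sum_mid_right: "((\<lambda>k. f k * mid k j) has_sum f j) UNIV"
proof -
  have "((\<lambda>k. f k * mid k j) has_sum f j) {j}"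
    using has_sum_finite[of "{j}" "\<lambda>k. f k * mid k j"] by (simp add: mid_def)
  then show ?thesis by (subst has_sum_cong_neutral[of "{j}"]) (auto simp: mid_def)
qed

lemma to_mat_mult: "to_mat (x * y) = mmul (to_mat x) (to_mat y)"
proof (intro ext)
  fix i j
  let ?c = "scalar_part x" and ?d = "scalar_part y" and ?A = "hs_part x" and ?B = "hs_part y"
  have "(\<lambda>k. to_mat x i k * to_mat y k j)
      = (\<lambda>k. mid i k * (?c * to_mat y k j) + (?d * ?A i k) * mid k j + ?A i k * ?B k j)"
    by (auto simp: to_mat_def fun_eq_iff algebra_simps)
  moreover have "(\<dots> has_sum (?c * to_mat y i j + ?d * ?A i j + mmul ?A ?B i j)) UNIV"
    unfolding mmul_def
    by (intro has_sum_add has_sum_mid_left has_sum_mid_right has_sum_infsum summable_mmul_entry) simp_all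
  ultimately have "mmul (to_mat x) (to_mat y) i j = ?c * to_mat y i j + ?d * ?A i j + mmul ?A ?B i j"
    unfolding mmul_def by (simp add: infsumI)
  then show "to_mat (x * y) i j = mmul (to_mat x) (to_mat y) i j"
    by (simp add: to_mat_def algebra_simps)
qed

lemma
  assumes "hs (msub g mid)" "hs (msub h mid)"
  shows hs_mmul_minus_mid: "hs (msub (mmul g h) mid)"
    and of_mat_mmul: "of_mat (mmul g h) = of_mat g * of_mat h"
proof -
  have "scalar_part (of_mat g * of_mat h) = 1" using assms by simp
  moreover have "to_mat (of_mat g * of_mat h) = mmul g h"
    using assms by (simp add: to_mat_mult to_mat_of_mat)
  ultimately show "hs (msub (mmul g h) mid)" "of_mat (mmul g h) = of_mat g * of_mat h"
    using hs_to_mat_minus_mid of_mat_to_mat by fastforce+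
qed

lemma
  assumes "g \<in> GL2"
  shows GL2_hs_minus_mid: "hs (msub g mid)"
    and GL2_hs_minv_minus_mid: "hs (msub (minv g) mid)"
    and of_mat_minv_right: "of_mat g * of_mat (minv g) = 1"
    and of_mat_minv_left: "of_mat (minv g) * of_mat g = 1"
proof -
  obtain h where h: "hs (msub g mid)" "hs (msub h mid)" "mmul g h = mid" "mmul h g = mid"
    using assms unfolding GL2_def by blast
  have gh: "of_mat g * of_mat h = 1" and hg: "of_mat h * of_mat g = 1"
    using of_mat_mmul[OF h(1,2)] of_mat_mmul[OF h(2,1)] h(3,4) by (simp_all add: of_mat_mid)
  have "h' = h" if h': "hs (msub h' mid)" "mmul g h' = mid" "mmul h' g = mid" for h'
  proof -
    have h'g: "of_mat h' * of_mat g = 1"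
      using of_mat_mmul[OF h'(1) h(1)] h'(3) by (simp add: of_mat_mid)
    have "of_mat h' = of_mat h' * (of_mat g * of_mat h)" by (simp add: gh)
    also have "\<dots> = of_mat h" by (simp add: h'g flip: mult.assoc)
    finally have "of_mat h' = of_mat h" .
    then show ?thesis using of_mat_inj h' h by blast
  qed
  then have "minv g = h"
    unfolding minv_def by (intro the_equality) (use h in blast)+
  then show "hs (msub g mid)" "hs (msub (minv g) mid)"
    "of_mat g * of_mat (minv g) = 1" "of_mat (minv g) * of_mat g = 1"
    using h gh hg by auto
qed

section \<open>Estimates in a Banach algebra\<close>

lemma norm_triple_product_le:
  fixes x y z :: "'a::real_normed_algebra"
  shows "norm (x * y * z) \<le> norm x * norm y * norm z"
  by (rule order_trans[OF norm_mult_ineq mult_right_mono[OF norm_mult_ineq norm_ge_zero]])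

lemma norm_inverse_le_twice:
  fixes a b a0 b0 :: "'a::real_normed_algebra_1"
  assumes "b * a = 1" "a0 * b0 = 1" "norm (a - a0) * norm b0 \<le> 1/2"
  shows "norm b \<le> 2 * norm b0"
proof -
  have "b * (a0 - a) * b0 = b * (a0 * b0) - (b * a) * b0"
    by (simp add: right_diff_distrib left_diff_distrib mult.assoc)
  then have "b = b0 + b * (a0 - a) * b0" using assms by simp
  then have "norm b \<le> norm b0 + norm (b * (a0 - a) * b0)"
    using norm_triangle_ineq by metis
  also have "norm (b * (a0 - a) * b0) \<le> norm b * (norm (a - a0) * norm b0)"
    using norm_triple_product_le[of b "a0 - a" b0] by (simp add: norm_minus_commute mult.assoc)
  also have "\<dots> \<le> norm b * (1/2)" by (rule mult_left_mono[OF assms(3)]) simp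
  finally show ?thesis by simp
qed

lemma continuous_on_two_sided_inverse:
  fixes a b :: "real \<Rightarrow> 'a::real_normed_algebra_1"
  assumes a: "continuous_on S a"
    and inverse: "\<And>s. s \<in> S \<Longrightarrow> a s * b s = 1 \<and> b s * a s = 1"
  shows "continuous_on S b"
  unfolding continuous_on_def
proof (intro ballI)
  fix t assume t: "t \<in> S"
  define B where "B = norm (b t)"
  have "B > 0" using inverse[OF t] by (auto simp: B_def)
  have a_lim: "((\<lambda>s. norm (a s - a t)) \<longlongrightarrow> 0) (at t within S)"
    using a t by (simp add: continuous_on_def tendsto_norm_zero_iff LIM_zero_iff)
  then have "\<forall>\<^sub>F s in at t within S. norm (a s - a t) < 1 / (2 * B)"
    by (rule order_tendstoD) (use \<open>B > 0\<close> in simp)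
  then have "\<forall>\<^sub>F s in at t within S. norm (a s - a t) * B \<le> 1/2"
    by eventually_elim (use \<open>B > 0\<close> in \<open>simp add: field_simps\<close>)
  moreover have "\<forall>\<^sub>F s in at t within S. s \<in> S"
    by (simp add: eventually_at_filter)
  ultimately have "\<forall>\<^sub>F s in at t within S. norm (b s - b t) \<le> 2 * B * B * norm (a s - a t)"
  proof eventually_elim
    case (elim s)
    then have small: "norm (a s - a t) * B \<le> 1/2" and "s \<in> S" by auto
    have "b s * (a t - a s) * b t = b s * (a t * b t) - (b s * a s) * b t"
      by (simp add: right_diff_distrib left_diff_distrib mult.assoc)
    then have "b s - b t = b s * (a t - a s) * b t" using inverse \<open>s \<in> S\<close> t by simp
    then have "norm (b s - b t) \<le> norm (b s) * (norm (a s - a t) * B)"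
      using norm_triple_product_le[of "b s" "a t - a s" "b t"]
      by (simp add: B_def norm_minus_commute mult.assoc)
    also have "\<dots> \<le> (2 * B) * (norm (a s - a t) * B)"
      using norm_inverse_le_twice[of "b s" "a s" "a t" "b t"] inverse \<open>s \<in> S\<close> t small
      by (intro mult_right_mono) (auto simp: B_def)
    finally show ?case by (simp add: algebra_simps)
  qed
  moreover have "((\<lambda>s. 2 * B * B * norm (a s - a t)) \<longlongrightarrow> 0) (at t within S)"
    using tendsto_mult_right_zero[OF a_lim] by simp
  ultimately have "((\<lambda>s. b s - b t) \<longlongrightarrow> 0) (at t within S)"
    by (rule Lim_null_comparison)
  then show "(b \<longlongrightarrow> b t) (at t within S)" by (simp add: LIM_zero_iff)
qed

lemma norm_diff_le_bound_times_integral: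
  fixes a w :: "real \<Rightarrow> 'a::{real_normed_algebra_1, banach}"
  assumes "finite T" and a: "continuous_on {0..1} a"
    and deriv: "\<And>s. s \<in> {0<..<1} - T \<Longrightarrow> (a has_vector_derivative a s * w s) (at s)"
    and w_le: "\<And>s. s \<in> {0<..<1} - T \<Longrightarrow> norm (w s) \<le> l s"
    and speed: "l integrable_on {0..1}" "\<And>s. s \<in> {0..1} \<Longrightarrow> 0 \<le> l s"
    and a_le: "\<And>s. s \<in> {0..1} \<Longrightarrow> norm (a s) \<le> C"
    and t: "t \<in> {0..1}"
  shows "norm (a t - a 0) \<le> C * integral {0..1} l"
proof -
  have "C \<ge> 0" using a_le[of 0] norm_ge_zero[of "a 0"] by (simp del: norm_ge_zero)
  define T' where "T' = insert 0 (insert 1 T)"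
  define v where "v s = (if s \<in> T' then 0 else a s * w s)" for s
  have "finite T'" using \<open>finite T\<close> by (simp add: T'_def)
  have "(v has_integral (a t - a 0)) {0..t}"
  proof (rule fundamental_theorem_of_calculus_interior_strong[OF \<open>finite T'\<close>])
    show "continuous_on {0..t} a" by (rule continuous_on_subset[OF a]) (use t in auto)
    show "(a has_vector_derivative v s) (at s)" if "s \<in> {0<..<t} - T'" for s
      using deriv[of s] that t by (auto simp: v_def T'_def)
  qed (use t in auto)
  moreover have "norm (v s) \<le> C * l s" if s: "s \<in> {0..t}" for s
  proof (cases "s \<in> T'")
    case True
    have "0 \<le> l s" using speed(2) s t by simp
    with True \<open>C \<ge> 0\<close> show ?thesis by (simp add: v_def)
  next
    case False
    then have s': "s \<in> {0<..<1} - T" using s t by (auto simp: T'_def)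
    then have "norm (a s) * norm (w s) \<le> C * l s"
      using a_le[of s] w_le[OF s'] \<open>C \<ge> 0\<close> by (intro mult_mono) auto
    then show ?thesis using False norm_mult_ineq[of "a s" "w s"] by (simp add: v_def)
  qed
  moreover have "l integrable_on {0..t}"
    by (rule integrable_on_subinterval[OF speed(1)]) (use t in auto)
  then have int_t: "(\<lambda>s. C * l s) integrable_on {0..t}"
    using integrable_on_cmult_left[of l "{0..t}" C] by simp
  ultimately have "norm (a t - a 0) \<le> integral {0..t} (\<lambda>s. C * l s)"
    using has_integral_integrable_integral integral_norm_bound_integral by metis
  also have "\<dots> \<le> integral {0..1} (\<lambda>s. C * l s)"
    using t \<open>C \<ge> 0\<close> speed int_t integrable_on_cmult_left[of l "{0..1}" C]
    by (intro integral_subset_le) auto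
  finally show ?thesis by simp
qed

text \<open>With \<open>S = sup\<^sub>t \<parallel>a t - a 0\<parallel>\<close> the previous bound gives \<open>S \<le> (\<parallel>a 0\<parallel> + S) \<integral>l\<close>, which
  can be solved for \<open>S\<close> when \<open>\<integral>l \<le> 1/2\<close>.\<close>

lemma norm_diff_le_of_log_derivative:
  fixes a w :: "real \<Rightarrow> 'a::{real_normed_algebra_1, banach}"
  assumes "finite T" and a: "continuous_on {0..1} a"
    and deriv: "\<And>s. s \<in> {0<..<1} - T \<Longrightarrow> (a has_vector_derivative a s * w s) (at s)"
    and w_le: "\<And>s. s \<in> {0<..<1} - T \<Longrightarrow> norm (w s) \<le> l s"
    and speed: "l integrable_on {0..1}" "\<And>s. s \<in> {0..1} \<Longrightarrow> 0 \<le> l s"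
    and small: "integral {0..1} l \<le> 1/2"
  shows "norm (a 1 - a 0) \<le> 2 * norm (a 0) * integral {0..1} l"
proof -
  define L where "L = integral {0..1} l"
  define S where "S = Sup ((\<lambda>t. norm (a t - a 0)) ` {0..1})"
  have bdd: "bdd_above ((\<lambda>t. norm (a t - a 0)) ` {0..1})"
    by (intro bounded_imp_bdd_above compact_imp_bounded compact_continuous_image
        continuous_intros a) simp
  have le_S: "norm (a t - a 0) \<le> S" if "t \<in> {0..1}" for t
    unfolding S_def by (rule cSup_upper) (use that bdd in auto)
  have "S \<ge> 0" using le_S[of 0] by simp
  have "norm (a s) \<le> norm (a 0) + S" if "s \<in> {0..1}" for s
    using norm_triangle_sub[of "a s" "a 0"] le_S[OF that] by simp
  then have "norm (a t - a 0) \<le> (norm (a 0) + S) * L" if "t \<in> {0..1}" for t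
    unfolding L_def using assms that by (intro norm_diff_le_bound_times_integral) auto
  then have "S \<le> (norm (a 0) + S) * L"
    unfolding S_def by (intro cSup_least) auto
  also have "\<dots> \<le> norm (a 0) * L + S * (1/2)"
    using mult_left_mono[OF small \<open>S \<ge> 0\<close>] by (simp add: L_def distrib_right)
  finally have "S \<le> 2 * norm (a 0) * L" by linarith
  then show ?thesis using le_S[of 1] by (simp add: L_def)
qed

section \<open>Piecewise smooth curves\<close>

lemma has_vector_derivative_iff_difference_quotient:
  "(f has_vector_derivative D) (at t within S) \<longleftrightarrow>
     ((\<lambda>s. norm ((f s - f t) /\<^sub>R (s - t) - D)) \<longlongrightarrow> 0) (at t within S)"
proof -
  have "norm ((1 / norm (s - t)) *\<^sub>R (f s - (f t + (s - t) *\<^sub>R D)))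
      = norm ((f s - f t) /\<^sub>R (s - t) - D)" if "s \<noteq> t" for s
  proof -
    have "(1 / (s - t)) *\<^sub>R (f s - (f t + (s - t) *\<^sub>R D))
        = (1 / (s - t)) *\<^sub>R (f s - f t) - (1 / (s - t)) *\<^sub>R ((s - t) *\<^sub>R D)"
      by (simp only: diff_diff_eq[symmetric] scaleR_diff_right)
    also have "(1 / (s - t)) *\<^sub>R ((s - t) *\<^sub>R D) = D" using that by simp
    finally have "(f s - f t) /\<^sub>R (s - t) - D = (1 / (s - t)) *\<^sub>R (f s - (f t + (s - t) *\<^sub>R D))"
      by (simp add: divide_inverse)
    then show ?thesis by simp
  qed
  then have "\<forall>\<^sub>F s in at t within S. norm ((1 / norm (s - t)) *\<^sub>R (f s - (f t + (s - t) *\<^sub>R D)))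
      = norm ((f s - f t) /\<^sub>R (s - t) - D)"
    by (auto simp: eventually_at_filter)
  then have "((\<lambda>s. norm ((1 / norm (s - t)) *\<^sub>R (f s - (f t + (s - t) *\<^sub>R D)))) \<longlongrightarrow> 0) (at t within S)
      \<longleftrightarrow> ((\<lambda>s. norm ((f s - f t) /\<^sub>R (s - t) - D)) \<longlongrightarrow> 0) (at t within S)"
    by (rule tendsto_cong)
  then have "((\<lambda>s. (1 / norm (s - t)) *\<^sub>R (f s - (f t + (s - t) *\<^sub>R D))) \<longlongrightarrow> 0) (at t within S)
      \<longleftrightarrow> ((\<lambda>s. norm ((f s - f t) /\<^sub>R (s - t) - D)) \<longlongrightarrow> 0) (at t within S)"
    by (simp only: tendsto_norm_zero_iff)
  then show ?thesis
    unfolding has_vector_derivative_def has_derivative_within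
    by (simp add: bounded_linear_scaleR_left)
qed

lemma hs_deriv_within_iff_has_vector_derivative:
  assumes "\<forall>s\<in>S. hs (msub (\<alpha> s) mid)" "t \<in> S" "hs D"
  shows "hs_deriv_within \<alpha> D t S \<longleftrightarrow>
    ((\<lambda>s. of_mat (\<alpha> s)) has_vector_derivative of_hs D) (at t within S)"
proof -
  let ?q = "\<lambda>s. (\<lambda>i j. (\<alpha> s i j - \<alpha> t i j) / complex_of_real (s - t) - D i j)"
  have "norm ((of_mat (\<alpha> s) - of_mat (\<alpha> t)) /\<^sub>R (s - t) - of_hs D) = hs_norm (?q s)"
    if "s \<in> S" for s
  proof -
    have "scalar_part ((of_mat (\<alpha> s) - of_mat (\<alpha> t)) /\<^sub>R (s - t) - of_hs D) = 0"
      using assms that by simp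
    moreover have "hs_part ((of_mat (\<alpha> s) - of_mat (\<alpha> t)) /\<^sub>R (s - t) - of_hs D) = ?q s"
      using assms that
      by (intro ext) (simp add: msub_def divide_inverse mult.commute of_real_inverse)
    ultimately show ?thesis by (simp add: norm_unitization_eq)
  qed
  then have "\<forall>\<^sub>F s in at t within S.
      norm ((of_mat (\<alpha> s) - of_mat (\<alpha> t)) /\<^sub>R (s - t) - of_hs D) = hs_norm (?q s)"
    by (auto simp: eventually_at_filter)
  from tendsto_cong[OF this] show ?thesis
    unfolding hs_deriv_within_def has_vector_derivative_iff_difference_quotient
    using assms(3) by simp
qed

lemma hs_cont_on_iff_continuous_on:
  assumes "\<forall>s\<in>S. hs (D s)"
  shows "hs_cont_on S D \<longleftrightarrow> continuous_on S (\<lambda>s. of_hs (D s))"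
proof -
  have "((\<lambda>s. hs_norm (msub (D s) (D t))) \<longlongrightarrow> 0) (at t within S)
     \<longleftrightarrow> ((\<lambda>s. of_hs (D s)) \<longlongrightarrow> of_hs (D t)) (at t within S)" if "t \<in> S" for t
  proof -
    have "\<forall>\<^sub>F s in at t within S. norm (of_hs (D s) - of_hs (D t)) = hs_norm (msub (D s) (D t))"
      using assms that by (auto simp: eventually_at_filter of_hs_diff norm_of_hs hs_diff msub_def)
    then have "((\<lambda>s. norm (of_hs (D s) - of_hs (D t))) \<longlongrightarrow> 0) (at t within S)
        \<longleftrightarrow> ((\<lambda>s. hs_norm (msub (D s) (D t))) \<longlongrightarrow> 0) (at t within S)"
      by (rule tendsto_cong)
    then show ?thesis using tendsto_norm_zero_iff LIM_zero_iff by metis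
  qed
  then show ?thesis unfolding hs_cont_on_def continuous_on_def by blast
qed

definition consecutive :: "real set \<Rightarrow> real \<Rightarrow> real \<Rightarrow> bool" where
  "consecutive T c d \<longleftrightarrow> c \<in> T \<and> d \<in> T \<and> c < d \<and> {c<..<d} \<inter> T = {}"

lemma consecutive_around:
  assumes "finite T" "1 \<in> T" "x < 1" "\<exists>c\<in>T. c \<le> x"
  obtains c d where "consecutive T c d" "c \<le> x" "x < d"
proof -
  define c where "c = Max {s\<in>T. s \<le> x}"
  define d where "d = Min {s\<in>T. x < s}"
  have fin: "finite {s\<in>T. s \<le> x}" "{s\<in>T. s \<le> x} \<noteq> {}" "finite {s\<in>T. x < s}" "{s\<in>T. x < s} \<noteq> {}"
    using assms by auto
  have "c \<in> T" "c \<le> x" "d \<in> T" "x < d"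
    using Max_in[OF fin(1,2)] Min_in[OF fin(3,4)] by (auto simp: c_def d_def)
  moreover have "s \<le> c \<or> d \<le> s" if "s \<in> T" for s
    using that fin by (cases "s \<le> x") (auto simp: c_def d_def)
  ultimately have "consecutive T c d"
    by (fastforce simp: consecutive_def)
  with \<open>c \<le> x\<close> \<open>x < d\<close> that show ?thesis by blast
qed

lemma consecutive_induct:
  assumes "finite T" "0 \<in> T" "T \<subseteq> {0..}" "P 0"
    and step: "\<And>c d. consecutive T c d \<Longrightarrow> P c \<Longrightarrow> P d"
  shows "d \<in> T \<Longrightarrow> P d"
proof (induction "card {s\<in>T. s < d}" arbitrary: d rule: less_induct)
  case (less d)
  show ?case
  proof (cases "d = 0")
    case True then show ?thesis using assms by simp
  next
    case False
    then have fin: "finite {s\<in>T. s < d}" "{s\<in>T. s < d} \<noteq> {}"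
      using less.prems assms by force+
    define c where "c = Max {s\<in>T. s < d}"
    have c: "c \<in> T" "c < d" using Max_in[OF fin] unfolding c_def by auto
    have "s \<le> c" if "s \<in> T" "s < d" for s
      using fin that by (simp add: c_def)
    then have "consecutive T c d"
      using c less.prems by (force simp: consecutive_def)
    moreover have "card {s\<in>T. s < c} < card {s\<in>T. s < d}"
      by (rule psubset_card_mono) (use fin c in auto)
    then have "P c" using less.hyps c by blast
    ultimately show ?thesis by (rule step)
  qed
qed

lemma continuous_on_if_consecutive:
  fixes f :: "real \<Rightarrow> 'a::topological_space"
  assumes "finite T" "{0,1} \<subseteq> T" "T \<subseteq> {0..1}"
    and "\<And>c d. consecutive T c d \<Longrightarrow> continuous_on {c..d} f"
  shows "continuous_on {0..1} f"
proof -
  have "continuous_on {0..d} f" if "d \<in> T" for d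
  proof (rule consecutive_induct[where P = "\<lambda>d. continuous_on {0..d} f", OF _ _ _ _ _ that])
    fix c d assume cd: "consecutive T c d" and "continuous_on {0..c} f"
    moreover have "{0..d} = {0..c} \<union> {c..d}" using cd assms(3) by (auto simp: consecutive_def)
    ultimately show "continuous_on {0..d} f"
      using continuous_on_closed_Un[of "{0..c}" "{c..d}" f] assms(4)[OF cd] by simp
  qed (use assms in auto)
  then show ?thesis using assms(2) by auto
qed

lemma integrable_on_if_consecutive:
  fixes f :: "real \<Rightarrow> 'a::banach"
  assumes "finite T" "{0,1} \<subseteq> T" "T \<subseteq> {0..1}"
    and "\<And>c d. consecutive T c d \<Longrightarrow> f integrable_on {c..d}"
  shows "f integrable_on {0..1}"
proof -
  have "f integrable_on {0..d}" if "d \<in> T" for d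
  proof (rule consecutive_induct[where P = "\<lambda>d. f integrable_on {0..d}", OF _ _ _ _ _ that])
    fix c d assume cd: "consecutive T c d" and "f integrable_on {0..c}"
    moreover have "0 \<le> c" "c \<le> d" using cd assms(3) by (auto simp: consecutive_def)
    ultimately show "f integrable_on {0..d}"
      using Henstock_Kurzweil_Integration.integrable_combine assms(4)[OF cd] by blast
  qed (use assms integrable_on_refl[of f 0] in auto)
  then show ?thesis using assms(2) by auto
qed

text \<open>Derivatives are required to have scalar part \<open>0\<close>, so that they come from
  Hilbert--Schmidt matrices.\<close>

definition pw_smooth_on :: "real set \<Rightarrow> (real \<Rightarrow> 'i unitization) \<Rightarrow> bool" where
  "pw_smooth_on T a \<longleftrightarrow> finite T \<and> {0,1} \<subseteq> T \<and> T \<subseteq> {0..1} \<and>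
     (\<forall>c d. consecutive T c d \<longrightarrow>
        (\<exists>a'. (\<forall>t\<in>{c..d}. (a has_vector_derivative a' t) (at t within {c..d}) \<and> scalar_part (a' t) = 0)
              \<and> continuous_on {c..d} a'))"

lemma pw_smooth_on_partition:
  "pw_smooth_on T a \<Longrightarrow> finite T \<and> {0,1} \<subseteq> T \<and> T \<subseteq> {0..1}"
  by (simp add: pw_smooth_on_def)

lemma pw_smooth_onE:
  assumes "pw_smooth_on T a" "consecutive T c d"
  obtains a' where "\<And>t. t \<in> {c..d} \<Longrightarrow> (a has_vector_derivative a' t) (at t within {c..d})"
    "\<And>t. t \<in> {c..d} \<Longrightarrow> scalar_part (a' t) = 0" "continuous_on {c..d} a'"
proof -
  have "\<exists>a'. (\<forall>t\<in>{c..d}. (a has_vector_derivative a' t) (at t within {c..d})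
      \<and> scalar_part (a' t) = 0) \<and> continuous_on {c..d} a'"
    using assms by (simp add: pw_smooth_on_def)
  then obtain a' where "\<forall>t\<in>{c..d}. (a has_vector_derivative a' t) (at t within {c..d})
      \<and> scalar_part (a' t) = 0" "continuous_on {c..d} a'"
    by blast
  then show ?thesis using that by blast
qed

lemma hs_smooth_piece_iff:
  assumes "\<forall>s\<in>{c..d}. hs (msub (\<alpha> s) mid)"
  shows "(\<exists>D. (\<forall>t\<in>{c..d}. hs_deriv_within \<alpha> (D t) t {c..d}) \<and> hs_cont_on {c..d} D) \<longleftrightarrow>
    (\<exists>a'. (\<forall>t\<in>{c..d}. ((\<lambda>t. of_mat (\<alpha> t)) has_vector_derivative a' t) (at t within {c..d})
              \<and> scalar_part (a' t) = 0) \<and> continuous_on {c..d} a')"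
    (is "(\<exists>D. ?hs D) \<longleftrightarrow> (\<exists>a'. ?unit a')")
proof
  assume "\<exists>D. ?hs D"
  then obtain D where D: "?hs D" by blast
  then have hsD: "\<forall>t\<in>{c..d}. hs (D t)" by (simp add: hs_deriv_within_def)
  then have "((\<lambda>t. of_mat (\<alpha> t)) has_vector_derivative of_hs (D t)) (at t within {c..d})"
    if "t \<in> {c..d}" for t
  proof -
    have "hs (D t)" "hs_deriv_within \<alpha> (D t) t {c..d}" using D hsD that by auto
    then show ?thesis using hs_deriv_within_iff_has_vector_derivative[OF assms that] by simp
  qed
  moreover have "continuous_on {c..d} (\<lambda>t. of_hs (D t))"
    using D hs_cont_on_iff_continuous_on[OF hsD] by blast
  ultimately have "?unit (\<lambda>t. of_hs (D t))" using hsD by simp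
  then show "\<exists>a'. ?unit a'" by (rule exI[of _ "\<lambda>t. of_hs (D t)"])
next
  assume "\<exists>a'. ?unit a'"
  then obtain a' where a': "?unit a'" by blast
  then have eq: "of_hs (hs_part (a' t)) = a' t" if "t \<in> {c..d}" for t
    using that by (simp add: of_hs_hs_part)
  have "hs_deriv_within \<alpha> (hs_part (a' t)) t {c..d}" if "t \<in> {c..d}" for t
    using hs_deriv_within_iff_has_vector_derivative[OF assms that hs_hs_part] a' eq that by simp
  moreover have "continuous_on {c..d} (\<lambda>t. of_hs (hs_part (a' t)))"
    using a' eq continuous_on_cong[of "{c..d}" "{c..d}" "\<lambda>t. of_hs (hs_part (a' t))" a'] by simp
  then have "hs_cont_on {c..d} (\<lambda>t. hs_part (a' t))"
    using hs_cont_on_iff_continuous_on[of "{c..d}" "\<lambda>t. hs_part (a' t)"] by simp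
  ultimately show "\<exists>D. ?hs D" by (intro exI[of _ "\<lambda>t. hs_part (a' t)"]) blast
qed

lemma hs_pw_smooth_iff:
  assumes "\<forall>s\<in>{0..1}. hs (msub (\<alpha> s) mid)"
  shows "hs_pw_smooth \<alpha> \<longleftrightarrow> (\<exists>T. pw_smooth_on T (\<lambda>t. of_mat (\<alpha> t)))"
proof -
  let ?P = "\<lambda>c d. \<exists>D. (\<forall>t\<in>{c..d}. hs_deriv_within \<alpha> (D t) t {c..d}) \<and> hs_cont_on {c..d} D"
  let ?Q = "\<lambda>c d. \<exists>a'. (\<forall>t\<in>{c..d}. ((\<lambda>t. of_mat (\<alpha> t)) has_vector_derivative a' t)
      (at t within {c..d}) \<and> scalar_part (a' t) = 0) \<and> continuous_on {c..d} a'"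
  have "?P c d \<longleftrightarrow> ?Q c d" if "consecutive T c d" "T \<subseteq> {0..1}" for T c d
  proof (rule hs_smooth_piece_iff)
    have "0 \<le> c" "d \<le> 1" using that by (auto simp: consecutive_def)
    then show "\<forall>s\<in>{c..d}. hs (msub (\<alpha> s) mid)" using assms by auto
  qed
  note PQ = this
  show ?thesis
  proof
    assume "hs_pw_smooth \<alpha>"
    then obtain T where T: "finite T" "{0,1} \<subseteq> T" "T \<subseteq> {0..1}"
      and P: "\<forall>c\<in>T. \<forall>d\<in>T. c < d \<and> {c<..<d} \<inter> T = {} \<longrightarrow> ?P c d"
      unfolding hs_pw_smooth_def by blast
    have "?Q c d" if "consecutive T c d" for c d
    proof -
      have "?P c d" using P that by (simp add: consecutive_def)
      then show ?thesis by (rule PQ[OF that T(3), THEN iffD1])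
    qed
    then have "pw_smooth_on T (\<lambda>t. of_mat (\<alpha> t))"
      unfolding pw_smooth_on_def using T by (intro conjI allI impI) simp_all
    then show "\<exists>T. pw_smooth_on T (\<lambda>t. of_mat (\<alpha> t))" ..
  next
    assume "\<exists>T. pw_smooth_on T (\<lambda>t. of_mat (\<alpha> t))"
    then obtain T where T: "finite T" "{0,1} \<subseteq> T" "T \<subseteq> {0..1}"
      and Q: "\<forall>c d. consecutive T c d \<longrightarrow> ?Q c d"
      unfolding pw_smooth_on_def by blast
    have "?P c d" if "c \<in> T" "d \<in> T" "c < d \<and> {c<..<d} \<inter> T = {}" for c d
    proof -
      have cd: "consecutive T c d" using that by (simp add: consecutive_def)
      then show ?thesis using Q by (intro PQ[OF cd T(3), THEN iffD2]) simp
    qed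
    then show "hs_pw_smooth \<alpha>"
      unfolding hs_pw_smooth_def using T by (intro exI[of _ T] conjI ballI impI) simp_all
  qed
qed

lemma pw_smooth_on_continuous:
  assumes "pw_smooth_on T a"
  shows "continuous_on {0..1} a"
proof (rule continuous_on_if_consecutive)
  show "finite T" "{0,1} \<subseteq> T" "T \<subseteq> {0..1}" using pw_smooth_on_partition[OF assms] by auto
  fix c d assume "consecutive T c d"
  then obtain a' where "\<forall>t\<in>{c..d}. (a has_vector_derivative a' t) (at t within {c..d})"
    using pw_smooth_onE[OF assms] by metis
  then show "continuous_on {c..d} a"
    unfolding continuous_on_eq_continuous_within using has_vector_derivative_continuous by blast
qed

lemma pw_smooth_on_has_vector_derivative:
  assumes "pw_smooth_on T a" "s \<in> {0<..<1} - T"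
  obtains a' where "(a has_vector_derivative a') (at s)" "scalar_part a' = 0"
proof -
  have T: "finite T" "{0,1} \<subseteq> T" using pw_smooth_on_partition[OF assms(1)] by auto
  have "\<exists>c\<in>T. c \<le> s" using T assms(2) by (intro bexI[of _ 0]) auto
  then obtain c d where cd: "consecutive T c d" "c \<le> s" "s < d"
    using consecutive_around[of T s] T assms(2) by auto
  then obtain a' where a': "\<And>t. t \<in> {c..d} \<Longrightarrow> (a has_vector_derivative a' t) (at t within {c..d})"
    "\<And>t. t \<in> {c..d} \<Longrightarrow> scalar_part (a' t) = 0"
    using pw_smooth_onE[OF assms(1)] by metis
  have "s \<in> {c<..<d}" using cd assms(2) by (auto simp: consecutive_def)
  moreover have "at s within {c..d} = at s" using calculation by (intro at_within_interior) simp
  ultimately show ?thesis using a'[of s] that by auto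
qed

lemma
  assumes "\<forall>t\<in>{0..1}. hs (msub (\<alpha> t) mid)" "s \<in> {0<..<1}"
    and "((\<lambda>t. of_mat (\<alpha> t)) has_vector_derivative a') (at s)" "scalar_part a' = 0"
  shows hs_hs_vel: "hs (hs_vel \<alpha> s)"
    and of_hs_hs_vel: "of_hs (hs_vel \<alpha> s) = a'"
proof -
  have s: "s \<in> {0..1}" and at: "at s within {0..1} = at s"
    using assms(2) by (auto intro: at_within_interior)
  have "hs_deriv_within \<alpha> (hs_part a') s {0..1}"
    using hs_deriv_within_iff_has_vector_derivative[OF assms(1) s] assms(3,4) at
    by (simp add: of_hs_hs_part)
  then have vel: "hs_deriv_within \<alpha> (hs_vel \<alpha> s) s {0..1}"
    unfolding hs_vel_def by (rule someI[where P = "\<lambda>D. hs_deriv_within \<alpha> D s {0..1}"])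
  then show "hs (hs_vel \<alpha> s)" by (simp add: hs_deriv_within_def)
  then have "((\<lambda>t. of_mat (\<alpha> t)) has_vector_derivative of_hs (hs_vel \<alpha> s)) (at s)"
    using hs_deriv_within_iff_has_vector_derivative[OF assms(1) s] vel at by simp
  then show "of_hs (hs_vel \<alpha> s) = a'"
    using assms(3) by (rule vector_derivative_unique_at)
qed

section \<open>Length of a curve controls the distance of its endpoints\<close>

lemma hs_norm_mmul_minv:
  assumes "g \<in> GL2" "hs v"
  shows "hs_norm (mmul (minv g) v) = norm (of_mat (minv g) * of_hs v)"
proof -
  let ?x = "of_mat (minv g) * of_hs v"
  have "scalar_part ?x = 0" using assms GL2_hs_minv_minus_mid by simp
  moreover have "to_mat ?x = mmul (minv g) v"
    using assms
    by (simp add: to_mat_mult to_mat_of_mat[OF GL2_hs_minv_minus_mid[OF assms(1)]] to_mat_of_hs)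
  ultimately show ?thesis by (simp add: norm_eq_hs_norm_to_mat)
qed

lemma integrable_hs_speed:
  assumes \<alpha>: "\<forall>t\<in>{0..1}. \<alpha> t \<in> GL2" and "hs_pw_smooth \<alpha>"
  shows "(\<lambda>t. hs_norm (mmul (minv (\<alpha> t)) (hs_vel \<alpha> t))) integrable_on {0..1}"
proof -
  have hs\<alpha>: "\<forall>t\<in>{0..1}. hs (msub (\<alpha> t) mid)" using \<alpha> GL2_hs_minus_mid by blast
  then obtain T where T: "pw_smooth_on T (\<lambda>t. of_mat (\<alpha> t))"
    using hs_pw_smooth_iff assms(2) by blast
  have "continuous_on {0..1} (\<lambda>t. of_mat (minv (\<alpha> t)))"
    using \<alpha> of_mat_minv_left of_mat_minv_right
    by (intro continuous_on_two_sided_inverse[OF pw_smooth_on_continuous[OF T]]) blast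
  show ?thesis
  proof (rule integrable_on_if_consecutive)
    show "finite T" "{0,1} \<subseteq> T" "T \<subseteq> {0..1}" using pw_smooth_on_partition[OF T] by auto
    fix c d assume cd: "consecutive T c d"
    then have sub: "{c..d} \<subseteq> {0..1}" using \<open>T \<subseteq> {0..1}\<close> by (auto simp: consecutive_def)
    obtain a' where a': "\<And>t. t \<in> {c..d} \<Longrightarrow>
        ((\<lambda>t. of_mat (\<alpha> t)) has_vector_derivative a' t) (at t within {c..d})"
      "\<And>t. t \<in> {c..d} \<Longrightarrow> scalar_part (a' t) = 0" "continuous_on {c..d} a'"
      using pw_smooth_onE[OF T cd] by metis
    have "continuous_on {c..d} (\<lambda>t. norm (of_mat (minv (\<alpha> t)) * a' t))"
      by (intro continuous_intros a'(3) continuous_on_subset[OF \<open>continuous_on {0..1} _\<close> sub])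
    then have "(\<lambda>t. norm (of_mat (minv (\<alpha> t)) * a' t)) integrable_on {c..d}"
      by (rule integrable_continuous_interval)
    then show "(\<lambda>t. hs_norm (mmul (minv (\<alpha> t)) (hs_vel \<alpha> t))) integrable_on {c..d}"
    proof (rule integrable_spike_finite[of "{c,d}", rotated 2])
      fix t assume "t \<in> {c..d} - {c,d}"
      then have t: "t \<in> {c<..<d}" by auto
      then have "t \<in> {0<..<1}" using sub by auto
      moreover have "at t within {c..d} = at t" using t by (intro at_within_interior) simp
      ultimately have "hs (hs_vel \<alpha> t)" "of_hs (hs_vel \<alpha> t) = a' t"
        using hs_hs_vel[OF hs\<alpha>] of_hs_hs_vel[OF hs\<alpha>] a'(1,2)[of t] t by auto
      moreover have "\<alpha> t \<in> GL2" using \<alpha> t sub by auto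
      ultimately show "hs_norm (mmul (minv (\<alpha> t)) (hs_vel \<alpha> t)) = norm (of_mat (minv (\<alpha> t)) * a' t)"
        using hs_norm_mmul_minv by metis
    qed simp
  qed
qed

lemma hs_norm_endpoints_le_curve_length:
  assumes \<alpha>: "\<forall>t\<in>{0..1}. \<alpha> t \<in> GL2" and "hs_pw_smooth \<alpha>" and short: "curve_length \<alpha> \<le> 1/2"
  shows "hs_norm (msub (\<alpha> 1) (\<alpha> 0)) \<le> 2 * norm (of_mat (\<alpha> 0)) * curve_length \<alpha>"
proof -
  have hs\<alpha>: "\<forall>t\<in>{0..1}. hs (msub (\<alpha> t) mid)" using \<alpha> GL2_hs_minus_mid by blast
  then obtain T where T: "pw_smooth_on T (\<lambda>t. of_mat (\<alpha> t))"
    using hs_pw_smooth_iff assms(2) by blast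
  define speed where "speed = (\<lambda>t. hs_norm (mmul (minv (\<alpha> t)) (hs_vel \<alpha> t)))"
  have "norm (of_mat (\<alpha> 1) - of_mat (\<alpha> 0)) \<le> 2 * norm (of_mat (\<alpha> 0)) * integral {0..1} speed"
  proof (rule norm_diff_le_of_log_derivative[where w = "\<lambda>s. of_mat (minv (\<alpha> s)) * of_hs (hs_vel \<alpha> s)"])
    show "finite T" using pw_smooth_on_partition[OF T] by auto
    show "continuous_on {0..1} (\<lambda>t. of_mat (\<alpha> t))" by (rule pw_smooth_on_continuous[OF T])
    fix s assume s: "s \<in> {0<..<1} - T"
    obtain a' where a': "((\<lambda>t. of_mat (\<alpha> t)) has_vector_derivative a') (at s)" "scalar_part a' = 0"
      by (rule pw_smooth_on_has_vector_derivative[OF T s])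
    have hs_vel: "hs (hs_vel \<alpha> s)" and vel: "of_hs (hs_vel \<alpha> s) = a'"
      using hs_hs_vel[OF hs\<alpha> _ a'] of_hs_hs_vel[OF hs\<alpha> _ a'] s by auto
    have "\<alpha> s \<in> GL2" using \<alpha> s by auto
    show "((\<lambda>t. of_mat (\<alpha> t)) has_vector_derivative
        of_mat (\<alpha> s) * (of_mat (minv (\<alpha> s)) * of_hs (hs_vel \<alpha> s))) (at s)"
      using a' vel of_mat_minv_right[OF \<open>\<alpha> s \<in> GL2\<close>] by (simp flip: mult.assoc)
    show "norm (of_mat (minv (\<alpha> s)) * of_hs (hs_vel \<alpha> s)) \<le> speed s"
      using hs_norm_mmul_minv[OF \<open>\<alpha> s \<in> GL2\<close> hs_vel] by (simp add: speed_def)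
  next
    show "speed integrable_on {0..1}"
      using integrable_hs_speed[OF assms(1,2)] by (simp add: speed_def)
    show "\<And>s. 0 \<le> speed s" by (simp add: speed_def hs_norm_nonneg)
    show "integral {0..1} speed \<le> 1/2" using short by (simp add: curve_length_def speed_def)
  qed
  then show ?thesis
    using hs\<alpha> by (simp add: norm_of_mat_diff curve_length_def speed_def)
qed

section \<open>The exponential\<close>

lemma to_mat_simps:
  "to_mat 0 = (\<lambda>i j. 0)" "to_mat 1 = mid"
  "to_mat (x + y) = (\<lambda>i j. to_mat x i j + to_mat y i j)"
  "to_mat (x - y) = msub (to_mat x) (to_mat y)"
  "to_mat (r *\<^sub>R x) = (\<lambda>i j. of_real r * to_mat x i j)"
  by (simp_all add: to_mat_def msub_def fun_eq_iff algebra_simps)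

lemma to_mat_sum: "to_mat (\<Sum>k\<in>A. f k) = (\<lambda>i j. \<Sum>k\<in>A. to_mat (f k) i j)"
  by (induction A rule: infinite_finite_induct) (simp_all add: to_mat_simps)

lemma scalar_part_power: "scalar_part (x ^ n) = scalar_part x ^ n"
  by (induction n) simp_all

lemma mpow_eq_to_mat: "hs a \<Longrightarrow> mpow a k = to_mat (of_hs a ^ k)"
  by (induction k) (simp_all add: to_mat_simps to_mat_mult to_mat_of_hs)

lemma mexp_partial_eq_to_mat:
  "hs a \<Longrightarrow> mexp_partial a n = to_mat (\<Sum>k<n. of_hs a ^ k /\<^sub>R fact k)"
  by (simp add: mexp_partial_def to_mat_sum to_mat_simps mpow_eq_to_mat fun_eq_iff
      divide_inverse mult.commute of_real_inverse)

lemma scalar_part_exp_partial: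
  assumes "hs a" "n \<ge> 1"
  shows "scalar_part (\<Sum>k<n. of_hs a ^ k /\<^sub>R fact k) = 1"
proof -
  have "scalar_part (\<Sum>k<n. of_hs a ^ k /\<^sub>R fact k) = (\<Sum>k<n. scalar_part (of_hs a ^ k /\<^sub>R fact k))"
    by (induction n) simp_all
  also have "\<dots> = (\<Sum>k<n. if k = 0 then 1 else 0)"
    using assms(1) by (intro sum.cong) (simp_all add: scalar_part_power)
  also have "\<dots> = 1" using assms(2) by simp
  finally show ?thesis .
qed

lemma
  assumes "hs a"
  shows hs_mexp_minus_mid: "hs (msub (mexp a) mid)"
    and of_mat_mexp: "of_mat (mexp a) = exp (of_hs a)"
proof -
  define P where "P = (\<lambda>n. \<Sum>k<n. of_hs a ^ k /\<^sub>R fact k)"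
  have P: "P \<longlonglongrightarrow> exp (of_hs a)"
    using exp_converges[of "of_hs a"] by (simp add: sums_def P_def)
  have scalar_P: "\<forall>\<^sub>F n in sequentially. scalar_part (P n) = 1"
    using scalar_part_exp_partial[OF assms] by (auto simp: P_def eventually_sequentially)
  have "(\<lambda>n. scalar_part (P n)) \<longlonglongrightarrow> scalar_part (exp (of_hs a))"
    using P by (rule bounded_linear.tendsto[OF bounded_linear_scalar_part])
  moreover have "(\<lambda>n. scalar_part (P n)) \<longlonglongrightarrow> 1"
    using tendsto_cong[OF scalar_P] by simp
  ultimately have scalar_exp: "scalar_part (exp (of_hs a)) = 1"
    by (rule LIMSEQ_unique)
  have conv_iff: "(\<lambda>n. hs_norm (msub (mexp_partial a n) E)) \<longlonglongrightarrow> 0 \<longleftrightarrow> P \<longlonglongrightarrow> of_mat E"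
    if E: "hs (msub E mid)" for E
  proof -
    have "\<forall>\<^sub>F n in sequentially. norm (P n - of_mat E) = hs_norm (msub (mexp_partial a n) E)"
      using scalar_P
    proof eventually_elim
      case (elim n)
      then show ?case
        using E by (simp add: norm_eq_hs_norm_to_mat to_mat_simps to_mat_of_mat
            mexp_partial_eq_to_mat[OF assms] P_def)
    qed
    then have "(\<lambda>n. norm (P n - of_mat E)) \<longlonglongrightarrow> 0 \<longleftrightarrow>
        (\<lambda>n. hs_norm (msub (mexp_partial a n) E)) \<longlonglongrightarrow> 0"
      by (rule tendsto_cong)
    then show ?thesis by (simp only: tendsto_norm_zero_iff LIM_zero_iff)
  qed
  define E where "E = to_mat (exp (of_hs a))"
  have hsE: "hs (msub E mid)" and "of_mat E = exp (of_hs a)"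
    using hs_to_mat_minus_mid[OF scalar_exp] of_mat_to_mat[OF scalar_exp] by (simp_all add: E_def)
  have "mexp a = E"
    unfolding mexp_def
  proof (rule the_equality)
    show "hs (msub E mid) \<and> (\<lambda>n. hs_norm (msub (mexp_partial a n) E)) \<longlonglongrightarrow> 0"
      using hsE conv_iff P \<open>of_mat E = _\<close> by simp
    fix E' assume "hs (msub E' mid) \<and> (\<lambda>n. hs_norm (msub (mexp_partial a n) E')) \<longlonglongrightarrow> 0"
    then have "hs (msub E' mid)" "P \<longlonglongrightarrow> of_mat E'" using conv_iff by auto
    moreover from this(2) have "of_mat E' = of_mat E"
      using P \<open>of_mat E = _\<close> LIMSEQ_unique by simp
    ultimately show "E' = E" using hsE of_mat_inj by blast
  qed
  then show "hs (msub (mexp a) mid)" "of_mat (mexp a) = exp (of_hs a)"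
    using hsE \<open>of_mat E = _\<close> by simp_all
qed

lemma hs_mscale: "hs a \<Longrightarrow> hs (mscale t a)"
  by (simp add: mscale_def hs_cmult)

lemma of_hs_mscale: "hs a \<Longrightarrow> of_hs (mscale t a) = t *\<^sub>R of_hs a"
  by (rule unitization_eqI) (simp_all add: mscale_def hs_cmult)

section \<open>Connected Banach--Lie subgroups are joined by piecewise smooth curves\<close>

lemma pw_smooth_on_const: "pw_smooth_on {0,1} (\<lambda>t. c)"
  unfolding pw_smooth_on_def by (auto intro!: exI[of _ "\<lambda>t. 0"])

lemma pw_smooth_on_cong:
  assumes "pw_smooth_on T a" "\<And>t. t \<in> {0..1} \<Longrightarrow> a t = b t"
  shows "pw_smooth_on T b"
  unfolding pw_smooth_on_def
proof (intro conjI allI impI)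
  show "finite T" "{0,1} \<subseteq> T" "T \<subseteq> {0..1}" using pw_smooth_on_partition[OF assms(1)] by auto
  fix c d assume cd: "consecutive T c d"
  then have sub: "{c..d} \<subseteq> {0..1}" using \<open>T \<subseteq> {0..1}\<close> by (auto simp: consecutive_def)
  obtain a' where a': "\<And>t. t \<in> {c..d} \<Longrightarrow> (a has_vector_derivative a' t) (at t within {c..d})"
    "\<And>t. t \<in> {c..d} \<Longrightarrow> scalar_part (a' t) = 0" "continuous_on {c..d} a'"
    using pw_smooth_onE[OF assms(1) cd] by metis
  have "(b has_vector_derivative a' t) (at t within {c..d})" if "t \<in> {c..d}" for t
    using has_vector_derivative_transform[OF that _ a'(1)[OF that]] assms(2) sub by auto
  then show "\<exists>b'. (\<forall>t\<in>{c..d}. (b has_vector_derivative b' t) (at t within {c..d})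
      \<and> scalar_part (b' t) = 0) \<and> continuous_on {c..d} b'"
    using a'(2,3) by (intro exI[of _ a']) blast
qed

lemma pw_smooth_on_mult_exp:
  assumes "pw_smooth_on T a" "scalar_part x = 0"
  shows "pw_smooth_on T (\<lambda>t. a t * exp (t *\<^sub>R x))"
  unfolding pw_smooth_on_def
proof (intro conjI allI impI)
  show "finite T" "{0,1} \<subseteq> T" "T \<subseteq> {0..1}" using pw_smooth_on_partition[OF assms(1)] by auto
  fix c d assume cd: "consecutive T c d"
  obtain a' where a': "\<And>t. t \<in> {c..d} \<Longrightarrow> (a has_vector_derivative a' t) (at t within {c..d})"
    "\<And>t. t \<in> {c..d} \<Longrightarrow> scalar_part (a' t) = 0" "continuous_on {c..d} a'"
    using pw_smooth_onE[OF assms(1) cd] by metis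
  define b' where "b' t = a t * (exp (t *\<^sub>R x) * x) + a' t * exp (t *\<^sub>R x)" for t
  have "((\<lambda>t. a t * exp (t *\<^sub>R x)) has_vector_derivative b' t) (at t within {c..d})"
    if "t \<in> {c..d}" for t
    unfolding b'_def
    by (rule has_vector_derivative_mult[OF a'(1)[OF that] exp_scaleR_has_vector_derivative_right])
  moreover have "scalar_part (b' t) = 0" if "t \<in> {c..d}" for t
    using a'(2)[OF that] assms(2) by (simp add: b'_def)
  moreover have "continuous_on {c..d} b'"
  proof -
    have "continuous_on {c..d} a"
      using a'(1) continuous_on_eq_continuous_within has_vector_derivative_continuous by blast
    moreover have "continuous_on {c..d} (\<lambda>t. exp (t *\<^sub>R x))"
      by (rule continuous_on_vector_derivative) (rule exp_scaleR_has_vector_derivative_right)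
    ultimately show ?thesis unfolding b'_def by (intro continuous_intros a'(3))
  qed
  ultimately show "\<exists>b'. (\<forall>t\<in>{c..d}. ((\<lambda>t. a t * exp (t *\<^sub>R x)) has_vector_derivative b' t)
      (at t within {c..d}) \<and> scalar_part (b' t) = 0) \<and> continuous_on {c..d} b'"
    by (intro exI[of _ b']) blast
qed

definition pw_smooth_joinable :: "'i mat set \<Rightarrow> 'i mat \<Rightarrow> 'i mat \<Rightarrow> bool" where
  "pw_smooth_joinable G p q \<longleftrightarrow>
     (\<exists>\<alpha>. hs_pw_smooth \<alpha> \<and> (\<forall>t\<in>{0..1}. \<alpha> t \<in> G) \<and> \<alpha> 0 = p \<and> \<alpha> 1 = q)"

lemma pw_smooth_joinable_refl:
  assumes "p \<in> G" "G \<subseteq> GL2"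
  shows "pw_smooth_joinable G p p"
proof -
  have "hs_pw_smooth (\<lambda>t. p)"
    using hs_pw_smooth_iff[of "\<lambda>t. p"] pw_smooth_on_const assms GL2_hs_minus_mid by blast
  then show ?thesis using assms(1) unfolding pw_smooth_joinable_def by blast
qed

lemma pw_smooth_joinable_mmul_mexp:
  assumes G: "is_subgroup_GL2 G" and "pw_smooth_joinable G p g" and X: "X \<in> lie_alg G"
  shows "pw_smooth_joinable G p (mmul g (mexp X))"
proof -
  obtain \<alpha> where \<alpha>: "hs_pw_smooth \<alpha>" "\<forall>t\<in>{0..1}. \<alpha> t \<in> G" "\<alpha> 0 = p" "\<alpha> 1 = g"
    using assms(2) unfolding pw_smooth_joinable_def by blast
  have GL2: "G \<subseteq> GL2" and mmul_G: "\<forall>g\<in>G. \<forall>h\<in>G. mmul g h \<in> G"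
    using G by (auto simp: is_subgroup_GL2_def)
  have "hs X" and exp_G: "\<And>t. mexp (mscale t X) \<in> G" using X by (auto simp: lie_alg_def)
  have hs\<alpha>: "\<forall>t\<in>{0..1}. hs (msub (\<alpha> t) mid)" using \<alpha>(2) GL2 GL2_hs_minus_mid by blast
  have hs_exp: "hs (msub (mexp (mscale t X)) mid)" for t
    using hs_mexp_minus_mid[OF hs_mscale[OF \<open>hs X\<close>]] .
  have of_mat_exp: "of_mat (mexp (mscale t X)) = exp (t *\<^sub>R of_hs X)" for t
    using of_mat_mexp[OF hs_mscale[OF \<open>hs X\<close>]] of_hs_mscale[OF \<open>hs X\<close>] by simp
  define \<beta> where "\<beta> t = mmul (\<alpha> t) (mexp (mscale t X))" for t
  obtain T where "pw_smooth_on T (\<lambda>t. of_mat (\<alpha> t))"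
    using hs_pw_smooth_iff[OF hs\<alpha>] \<alpha>(1) by blast
  then have "pw_smooth_on T (\<lambda>t. of_mat (\<alpha> t) * exp (t *\<^sub>R of_hs X))"
    using \<open>hs X\<close> by (intro pw_smooth_on_mult_exp) simp_all
  then have "pw_smooth_on T (\<lambda>t. of_mat (\<beta> t))"
    by (rule pw_smooth_on_cong) (simp add: \<beta>_def of_mat_mmul hs\<alpha> hs_exp of_mat_exp)
  moreover have "\<forall>t\<in>{0..1}. hs (msub (\<beta> t) mid)"
    using hs\<alpha> hs_exp by (auto simp: \<beta>_def intro: hs_mmul_minus_mid)
  ultimately have "hs_pw_smooth \<beta>" using hs_pw_smooth_iff by blast
  moreover have "\<forall>t\<in>{0..1}. \<beta> t \<in> G" using \<alpha>(2) exp_G mmul_G by (simp add: \<beta>_def)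
  moreover have "\<beta> 0 = p"
  proof -
    have "mexp (mscale 0 X) = mid"
      by (rule of_mat_inj[OF hs_exp]) (simp_all add: of_mat_exp of_mat_mid msub_def hs_zero)
    then show ?thesis using \<alpha>(3) by (simp add: \<beta>_def mmul_mid_right)
  qed
  moreover have "\<beta> 1 = mmul g (mexp X)" using \<alpha>(4) by (simp add: \<beta>_def mscale_def)
  ultimately show ?thesis unfolding pw_smooth_joinable_def by blast
qed

lemma hs_norm_minv_mmul_minus_mid_le:
  assumes "g \<in> GL2" "h \<in> GL2"
  shows "hs_norm (msub (mmul (minv g) h) mid) \<le> norm (of_mat (minv g)) * hs_norm (msub h g)"
proof -
  have g: "hs (msub g mid)" "hs (msub (minv g) mid)" "of_mat (minv g) * of_mat g = 1"
    using assms(1) GL2_hs_minus_mid GL2_hs_minv_minus_mid of_mat_minv_left by blast+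
  have h: "hs (msub h mid)" using assms(2) GL2_hs_minus_mid by blast
  have "hs_norm (msub (mmul (minv g) h) mid) = norm (of_mat (mmul (minv g) h) - of_mat mid)"
    using hs_mmul_minus_mid[OF g(2) h] by (simp add: norm_of_mat_diff msub_def hs_zero)
  also have "\<dots> = norm (of_mat (minv g) * (of_mat h - of_mat g))"
    by (simp add: of_mat_mmul g h of_mat_mid right_diff_distrib)
  also have "\<dots> \<le> norm (of_mat (minv g)) * norm (of_mat h - of_mat g)"
    by (rule norm_mult_ineq)
  also have "\<dots> = norm (of_mat (minv g)) * hs_norm (msub h g)"
    by (simp add: norm_of_mat_diff g h)
  finally show ?thesis .
qed

lemma mmul_mmul_minv:
  assumes "g \<in> GL2" "h \<in> GL2"
  shows "mmul g (mmul (minv g) h) = h"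
proof -
  have g: "hs (msub g mid)" "hs (msub (minv g) mid)" "of_mat g * of_mat (minv g) = 1"
    using assms(1) GL2_hs_minus_mid GL2_hs_minv_minus_mid of_mat_minv_right by blast+
  have h: "hs (msub h mid)" using assms(2) GL2_hs_minus_mid by blast
  have "of_mat (mmul g (mmul (minv g) h)) = of_mat h"
    using g h by (simp add: hs_mmul_minus_mid of_mat_mmul flip: mult.assoc)
  then show ?thesis using of_mat_inj g h hs_mmul_minus_mid by metis
qed

lemma GL2_near_quotients:
  assumes "g \<in> GL2" "r > 0"
  shows "\<exists>\<epsilon>>0. \<forall>h\<in>GL2. hs_norm (msub h g) < \<epsilon> \<longrightarrow>
    hs_norm (msub (mmul (minv g) h) mid) < r \<and> hs_norm (msub (mmul (minv h) g) mid) < r"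
proof (intro exI conjI ballI impI)
  define \<beta> where "\<beta> = norm (of_mat (minv g))"
  have "\<beta> \<ge> 1"
    using norm_of_mat_ge_1[OF GL2_hs_minv_minus_mid[OF assms(1)]] by (simp add: \<beta>_def)
  show "min (r / (2 * \<beta>)) (1 / (2 * \<beta>)) > 0" using \<open>\<beta> \<ge> 1\<close> assms(2) by simp
  fix h assume h: "h \<in> GL2" and close: "hs_norm (msub h g) < min (r / (2 * \<beta>)) (1 / (2 * \<beta>))"
  have hs_gh: "hs (msub g mid)" "hs (msub h mid)" using assms(1) h GL2_hs_minus_mid by blast+
  have "hs_norm (msub (mmul (minv g) h) mid) \<le> \<beta> * hs_norm (msub h g)"
    unfolding \<beta>_def by (rule hs_norm_minv_mmul_minus_mid_le[OF assms(1) h])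
  also have "\<dots> \<le> \<beta> * (r / (2 * \<beta>))" using close \<open>\<beta> \<ge> 1\<close> by (intro mult_left_mono) auto
  also have "\<dots> < r" using \<open>\<beta> \<ge> 1\<close> assms(2) by simp
  finally have left: "hs_norm (msub (mmul (minv g) h) mid) < r" .
  have "norm (of_mat h - of_mat g) * \<beta> \<le> 1 / (2 * \<beta>) * \<beta>"
    using close \<open>\<beta> \<ge> 1\<close> by (intro mult_right_mono) (auto simp: norm_of_mat_diff hs_gh)
  also have "\<dots> = 1/2" using \<open>\<beta> \<ge> 1\<close> by simp
  finally have "norm (of_mat (minv h)) \<le> 2 * \<beta>"
    unfolding \<beta>_def
    by (rule norm_inverse_le_twice[OF of_mat_minv_left[OF h] of_mat_minv_right[OF assms(1)]])
  then have "hs_norm (msub (mmul (minv h) g) mid) \<le> 2 * \<beta> * hs_norm (msub g h)"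
    using hs_norm_minv_mmul_minus_mid_le[OF h assms(1)] hs_norm_nonneg
    by (meson mult_right_mono order_trans)
  also have "hs_norm (msub g h) = hs_norm (msub h g)"
    using norm_of_mat_diff[OF hs_gh] norm_of_mat_diff[OF hs_gh(2,1)] by (simp add: norm_minus_commute)
  also have "2 * \<beta> * hs_norm (msub h g) < 2 * \<beta> * (r / (2 * \<beta>))"
    using close \<open>\<beta> \<ge> 1\<close> by (intro mult_strict_left_mono) auto
  also have "\<dots> = r" using \<open>\<beta> \<ge> 1\<close> by simp
  finally have "hs_norm (msub (mmul (minv h) g) mid) < r" .
  with left show "hs_norm (msub (mmul (minv g) h) mid) < r"
    "hs_norm (msub (mmul (minv h) g) mid) < r" by blast+
qed

lemma banach_lie_subgroup_exp_onto_nbhd: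
  assumes "banach_lie_subgroup G"
  shows "\<exists>r>0. \<forall>k\<in>G. hs_norm (msub k mid) < r \<longrightarrow> (\<exists>X\<in>lie_alg G. mexp X = k)"
proof -
  obtain e U where U: "hs_rel_open G U" "mid \<in> U" "bij_betw mexp {X\<in>lie_alg G. hs_norm X < e} U"
    using assms unfolding banach_lie_subgroup_def by blast
  then obtain r where "r > 0" "\<forall>k\<in>G. hs_norm (msub k mid) < r \<longrightarrow> k \<in> U"
    unfolding hs_rel_open_def by blast
  moreover have "\<exists>X\<in>lie_alg G. mexp X = k" if "k \<in> U" for k
    using that bij_betw_imp_surj_on[OF U(3)] by force
  ultimately show ?thesis by blast
qed

lemma pw_smooth_joinable_extend:
  assumes G: "is_subgroup_GL2 G"
    and exp_onto: "\<And>k. k \<in> G \<Longrightarrow> hs_norm (msub k mid) < r \<Longrightarrow> \<exists>X\<in>lie_alg G. mexp X = k"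
    and "pw_smooth_joinable G p g" "g \<in> G" "h \<in> G"
    and close: "hs_norm (msub (mmul (minv g) h) mid) < r"
  shows "pw_smooth_joinable G p h"
proof -
  have "G \<subseteq> GL2" "mmul (minv g) h \<in> G"
    using G assms(4,5) by (auto simp: is_subgroup_GL2_def)
  then obtain X where "X \<in> lie_alg G" "mexp X = mmul (minv g) h"
    using exp_onto close by blast
  then have "pw_smooth_joinable G p (mmul g (mmul (minv g) h))"
    using pw_smooth_joinable_mmul_mexp[OF G assms(3)] by metis
  moreover have "g \<in> GL2" "h \<in> GL2" using \<open>G \<subseteq> GL2\<close> assms(4,5) by auto
  ultimately show ?thesis by (simp add: mmul_mmul_minv)
qed

lemma pw_smooth_joinable_locally_constant:
  assumes bl: "banach_lie_subgroup G" and "g \<in> G"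
  shows "\<exists>\<epsilon>>0. \<forall>h\<in>G. hs_norm (msub h g) < \<epsilon> \<longrightarrow>
    (pw_smooth_joinable G p h \<longleftrightarrow> pw_smooth_joinable G p g)"
proof -
  have G: "is_subgroup_GL2 G" and "G \<subseteq> GL2"
    using bl by (auto simp: banach_lie_subgroup_def is_subgroup_GL2_def)
  obtain r where "r > 0" and exp_onto:
    "\<forall>k\<in>G. hs_norm (msub k mid) < r \<longrightarrow> (\<exists>X\<in>lie_alg G. mexp X = k)"
    using banach_lie_subgroup_exp_onto_nbhd[OF bl] by blast
  have "g \<in> GL2" using \<open>g \<in> G\<close> \<open>G \<subseteq> GL2\<close> by blast
  obtain \<epsilon> where "\<epsilon> > 0" and close: "\<forall>h\<in>GL2. hs_norm (msub h g) < \<epsilon> \<longrightarrow>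
      hs_norm (msub (mmul (minv g) h) mid) < r \<and> hs_norm (msub (mmul (minv h) g) mid) < r"
    using GL2_near_quotients[OF \<open>g \<in> GL2\<close> \<open>r > 0\<close>] by blast
  have "pw_smooth_joinable G p h \<longleftrightarrow> pw_smooth_joinable G p g"
    if h: "h \<in> G" "hs_norm (msub h g) < \<epsilon>" for h
  proof -
    have near: "hs_norm (msub (mmul (minv g) h) mid) < r" "hs_norm (msub (mmul (minv h) g) mid) < r"
      using close h \<open>G \<subseteq> GL2\<close> by auto
    show ?thesis
      using pw_smooth_joinable_extend[OF G exp_onto[rule_format] _ h(1) \<open>g \<in> G\<close> near(2)]
        pw_smooth_joinable_extend[OF G exp_onto[rule_format] _ \<open>g \<in> G\<close> h(1) near(1)]
      by blast
  qed
  then show ?thesis using \<open>\<epsilon> > 0\<close> by blast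
qed

lemma hs_connected_locally_constant:
  assumes conn: "hs_connected G" and "R \<subseteq> G" "R \<noteq> {}"
    and locally_constant: "\<And>g. g \<in> G \<Longrightarrow> \<exists>\<epsilon>>0. \<forall>h\<in>G. hs_norm (msub h g) < \<epsilon> \<longrightarrow> (h \<in> R \<longleftrightarrow> g \<in> R)"
  shows "R = G"
proof -
  have "hs_rel_open G R"
    unfolding hs_rel_open_def
  proof (intro conjI ballI)
    fix g assume "g \<in> R"
    then show "\<exists>\<epsilon>>0. \<forall>h\<in>G. hs_norm (msub h g) < \<epsilon> \<longrightarrow> h \<in> R"
      using locally_constant[of g] \<open>R \<subseteq> G\<close> by auto
  qed (rule \<open>R \<subseteq> G\<close>)
  moreover have "hs_rel_open G (G - R)"
    unfolding hs_rel_open_def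
  proof (intro conjI ballI)
    fix g assume "g \<in> G - R"
    then show "\<exists>\<epsilon>>0. \<forall>h\<in>G. hs_norm (msub h g) < \<epsilon> \<longrightarrow> h \<in> G - R"
      using locally_constant[of g] by auto
  qed auto
  moreover have "R \<inter> (G - R) = {}" "R \<union> (G - R) = G" using \<open>R \<subseteq> G\<close> by auto
  ultimately have "G - R = {}"
    using conn \<open>R \<noteq> {}\<close> unfolding hs_connected_def by blast
  then show ?thesis using \<open>R \<subseteq> G\<close> by auto
qed

lemma connected_banach_lie_subgroup_pw_smooth_joinable:
  assumes bl: "banach_lie_subgroup G" and "hs_connected G" "p \<in> G" "q \<in> G"
  shows "pw_smooth_joinable G p q"
proof -
  have "G \<subseteq> GL2" using bl by (simp add: banach_lie_subgroup_def is_subgroup_GL2_def)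
  then have "{h\<in>G. pw_smooth_joinable G p h} \<noteq> {}"
    using pw_smooth_joinable_refl \<open>p \<in> G\<close> by blast
  then have "{h\<in>G. pw_smooth_joinable G p h} = G"
    using pw_smooth_joinable_locally_constant[OF bl] \<open>hs_connected G\<close>
    by (intro hs_connected_locally_constant) auto
  then show ?thesis using \<open>q \<in> G\<close> by blast
qed

section \<open>Cauchy sequences for the Finsler metric\<close>

lemma hs_norm_diff_le_dI:
  assumes "banach_lie_subgroup G" "hs_connected G" "p \<in> G" "q \<in> G"
    and "dI G p q < e" "e \<le> 1/2"
  shows "hs_norm (msub q p) \<le> 2 * norm (of_mat p) * e"
proof -
  have "G \<subseteq> GL2" using assms(1) by (simp add: banach_lie_subgroup_def is_subgroup_GL2_def)
  define lengths where "lengths = {curve_length \<alpha> | \<alpha>.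
    hs_pw_smooth \<alpha> \<and> (\<forall>t\<in>{0..1}. \<alpha> t \<in> G) \<and> \<alpha> 0 = p \<and> \<alpha> 1 = q}"
  \<comment> \<open>The infimum defining \<open>dI\<close> is over a nonempty set because \<open>G\<close> is connected.\<close>
  have "lengths \<noteq> {}"
    using connected_banach_lie_subgroup_pw_smooth_joinable[OF assms(1-4)]
    by (auto simp: lengths_def pw_smooth_joinable_def)
  moreover have "Inf lengths < e" using assms(5) by (simp add: dI_def lengths_def)
  ultimately obtain l where "l \<in> lengths" "l < e" using cInf_lessD by blast
  then obtain \<alpha> where \<alpha>: "hs_pw_smooth \<alpha>" "\<forall>t\<in>{0..1}. \<alpha> t \<in> G" "\<alpha> 0 = p" "\<alpha> 1 = q"
    and "curve_length \<alpha> < e"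
    unfolding lengths_def by blast
  then have "hs_norm (msub (\<alpha> 1) (\<alpha> 0)) \<le> 2 * norm (of_mat (\<alpha> 0)) * curve_length \<alpha>"
    using \<open>G \<subseteq> GL2\<close> assms(6) by (intro hs_norm_endpoints_le_curve_length) auto
  also have "\<dots> \<le> 2 * norm (of_mat (\<alpha> 0)) * e"
    using \<open>curve_length \<alpha> < e\<close> by (intro mult_left_mono) auto
  finally show ?thesis using \<alpha> by simp
qed

lemma dI_Cauchy_eventually_bounded:
  fixes x :: "nat \<Rightarrow> 'i mat"
  assumes G: "banach_lie_subgroup G" "hs_connected G" and x: "\<And>n. x n \<in> G"
    and Cauchy: "\<forall>e>0. \<exists>N. \<forall>n\<ge>N. \<forall>m\<ge>N. dI G (x n) (x m) < e"
  shows "\<exists>N M. M > 0 \<and> (\<forall>m\<ge>N. norm (of_mat (x m)) \<le> M)"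
proof -
  obtain K where K: "\<And>n m. n \<ge> K \<Longrightarrow> m \<ge> K \<Longrightarrow> dI G (x n) (x m) < 1/2"
    using Cauchy[rule_format, of "1/2"] by auto
  have hs_x: "hs (msub (x n) mid)" for n
    using x G(1) GL2_hs_minus_mid by (auto simp: banach_lie_subgroup_def is_subgroup_GL2_def)
  have "norm (of_mat (x m)) \<le> 2 * norm (of_mat (x K))" if "m \<ge> K" for m
  proof -
    have "norm (of_mat (x m) - of_mat (x K)) = hs_norm (msub (x m) (x K))"
      by (rule norm_of_mat_diff[OF hs_x hs_x])
    also have "\<dots> \<le> 2 * norm (of_mat (x K)) * (1/2)"
      using K[OF order_refl that] by (intro hs_norm_diff_le_dI[OF G x x]) auto
    finally show ?thesis using norm_triangle_sub[of "of_mat (x m)" "of_mat (x K)"] by simp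
  qed
  moreover have "norm (of_mat (x K)) \<ge> 1" by (rule norm_of_mat_ge_1[OF hs_x])
  ultimately show ?thesis by (intro exI[of _ K] exI[of _ "2 * norm (of_mat (x K))"]) auto
qed

theorem lemma4p4:
  fixes G :: "'i mat set" and x :: "nat \<Rightarrow> 'i mat"
  assumes "infinite (UNIV :: 'i set)"
    and "banach_lie_subgroup G"
    and "hs_closed_in_GL2 G"
    and "hs_connected G"
    and "self_adjoint_set G"
    and "\<And>n. x n \<in> G"
    and "\<forall>e>0. \<exists>N. \<forall>n\<ge>N. \<forall>m\<ge>N. dI G (x n) (x m) < e"
  shows "\<forall>e>0. \<exists>N. \<forall>n\<ge>N. \<forall>m\<ge>N. hs_norm (msub (x n) (x m)) < e"
proof (intro allI impI)
  note G = assms(2,4) and x = assms(6) and Cauchy = assms(7)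
  fix \<epsilon> :: real assume "\<epsilon> > 0"
  obtain N0 M where "M > 0" and bounded: "\<forall>m\<ge>N0. norm (of_mat (x m)) \<le> M"
    using dI_Cauchy_eventually_bounded[OF G x Cauchy] by blast
  define \<delta> where "\<delta> = min (1/2) (\<epsilon> / (4 * M))"
  have "\<delta> > 0" using \<open>\<epsilon> > 0\<close> \<open>M > 0\<close> by (simp add: \<delta>_def)
  then obtain N1 where N1: "\<forall>n\<ge>N1. \<forall>m\<ge>N1. dI G (x n) (x m) < \<delta>" using Cauchy by blast
  show "\<exists>N. \<forall>n\<ge>N. \<forall>m\<ge>N. hs_norm (msub (x n) (x m)) < \<epsilon>"
  proof (intro exI allI impI)
    fix n m assume "max N0 N1 \<le> n" "max N0 N1 \<le> m"
    then have "hs_norm (msub (x n) (x m)) \<le> 2 * norm (of_mat (x m)) * \<delta>"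
      using N1 by (intro hs_norm_diff_le_dI[OF G x x]) (auto simp: \<delta>_def)
    also have "\<dots> \<le> 2 * M * \<delta>"
      using bounded \<open>max N0 N1 \<le> m\<close> \<open>\<delta> > 0\<close> by (simp add: mult_right_mono)
    also have "\<dots> < \<epsilon>"
      using \<open>\<epsilon> > 0\<close> \<open>M > 0\<close> by (simp add: \<delta>_def min_def field_simps)
    finally show "hs_norm (msub (x n) (x m)) < \<epsilon>" .
  qed
qed

end
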